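(* Let $K_0,\dots,K_n$ be strictly concave kernel functions such that either all satisfy condition $(\infty')$ or all belong to $\mathrm{C}^1(0,2\pi)$. Let $\mathbf{w}^*\in\mathbb{T}^n$ be a local minimum point of $\overline{m}$, i.e. there is $\eta>0$ with $\overline{m}(\mathbf{w}^* )=\min\{\overline{m}(\mathbf{y}):d_{\mathbb{T}^n}(\mathbf{y},\mathbf{w}^* )<\eta\}$. Then $\mathbf{w}^*$ is an equioscillation point, i.e. $\underline{m}(\mathbf{w}^* )=\overline{m}(\mathbf{w}^* )$. Consequently, $\mathbf{w}^*$ belongs to some open simplex $S_\sigma$.
   Context: Identify the torus $\mathbb{T}=\mathbb{R}/2\pi\mathbb{Z}$ with $[0,2\pi)$, $d_{\mathbb{T}}(x,y)=\min\{|x-y|,2\pi-|x-y|\}$, $d_{\mathbb{T}^n}(\mathbf{x},\mathbf{y})=\max_jd_{\mathbb{T}}(x_j,y_j)$. A concave kernel function is a $2\pi$-periodic function $K:\mathbb{R}\to[-\infty,\infty)$ which is real-valued and concave on $(0,2\pi)$ with $\lim_{t\downarrow0}K(t)=\lim_{t\uparrow2\pi}K(t)$ existing in $[-\infty,\infty)$; strictly concave if strictly concave on $(0,2\pi)$. Condition $(\infty')$: either $\lim_{t\uparrow2\pi}D_\pm K(t)=-\infty$, or $\lim_{t\downarrow0}D_\pm K(t)=+\infty$ (both one-sided derivatives). For $\mathbf{y}\in\mathbb{T}^n$, $y_0=0$, $y_{n+1}=2\pi$, $F(\mathbf{y},t)=K_0(t)+\sum_{j=1}^nK_j(t-y_j)$.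 For a permutation $\sigma$ of $\{1,\dots,n\}$ ($\sigma(0)=0,\sigma(n+1)=n+1$), $S_\sigma=\{\mathbf{y}:0<y_{\sigma(1)}<\dots<y_{\sigma(n)}<2\pi\}$; for $\mathbf{y}$ with $0\le y_{\sigma(1)}\le\dots\le y_{\sigma(n)}\le2\pi$, $m_{\sigma(k)}(\mathbf{y})=\sup_{t\in[y_{\sigma(k)},y_{\sigma(k+1)}]}F(\mathbf{y},t)$, $k=0,\dots,n$; $\overline{m}(\mathbf{y})=\max_jm_j(\mathbf{y})=\sup_{t\in\mathbb{T}}F(\mathbf{y},t)$ and $\underline{m}(\mathbf{y})=\min_jm_j(\mathbf{y})$ (independent of the admissible $\sigma$). An equioscillation point is a $\mathbf{y}$ with $m_0(\mathbf{y})=\dots=m_n(\mathbf{y})$. *)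

theory Defs
  imports "HOL-Analysis.Analysis" "HOL-Library.Extended_Real"
begin

text \<open>Kernels take values in the extended reals; on (0,2pi) they are real-valued.
  The real part used for concavity and derivatives is kr K t = real_of_ereal (K t).\<close>

definition kr :: "(real \<Rightarrow> ereal) \<Rightarrow> real \<Rightarrow> real" where
  "kr K t = real_of_ereal (K t)"

definition strictly_concave_on :: "real set \<Rightarrow> (real \<Rightarrow> real) \<Rightarrow> bool" where
  "strictly_concave_on S f \<longleftrightarrow> convex S \<and>
     (\<forall>x\<in>S. \<forall>y\<in>S. x \<noteq> y \<longrightarrow> (\<forall>u::real. 0 < u \<and> u < 1 \<longrightarrow>
        (1 - u) * f x + u * f y < f ((1 - u) * x + u * y)))"

definition concave_kernel :: "(real \<Rightarrow> ereal) \<Rightarrow> bool" where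
  "concave_kernel K \<longleftrightarrow>
     (\<forall>t. K (t + 2 * pi) = K t) \<and>
     (\<forall>t\<in>{0<..<2 * pi}. \<bar>K t\<bar> \<noteq> \<infinity>) \<and>
     concave_on {0<..<2 * pi} (kr K) \<and>
     (\<exists>L. L \<noteq> \<infinity> \<and> (K \<longlongrightarrow> L) (at_right 0) \<and> (K \<longlongrightarrow> L) (at_left (2 * pi)) \<and> K 0 = L)"

definition strictly_concave_kernel :: "(real \<Rightarrow> ereal) \<Rightarrow> bool" where
  "strictly_concave_kernel K \<longleftrightarrow> concave_kernel K \<and> strictly_concave_on {0<..<2 * pi} (kr K)"

definition Dplus :: "(real \<Rightarrow> real) \<Rightarrow> real \<Rightarrow> real" where
  "Dplus f t = Lim (at_right 0) (\<lambda>h. (f (t + h) - f t) / h)"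

definition Dminus :: "(real \<Rightarrow> real) \<Rightarrow> real \<Rightarrow> real" where
  "Dminus f t = Lim (at_left 0) (\<lambda>h. (f (t + h) - f t) / h)"

definition cond_inf' :: "(real \<Rightarrow> ereal) \<Rightarrow> bool" where
  "cond_inf' K \<longleftrightarrow>
     (filterlim (Dplus (kr K)) at_bot (at_left (2 * pi)) \<and>
      filterlim (Dminus (kr K)) at_bot (at_left (2 * pi))) \<or>
     (filterlim (Dplus (kr K)) at_top (at_right 0) \<and>
      filterlim (Dminus (kr K)) at_top (at_right 0))"

definition C1_kernel :: "(real \<Rightarrow> ereal) \<Rightarrow> bool" where
  "C1_kernel K \<longleftrightarrow> (\<exists>k'. (\<forall>t\<in>{0<..<2 * pi}. (kr K has_real_derivative k' t) (at t)) \<and>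
                         continuous_on {0<..<2 * pi} k')"

definition torus :: "nat \<Rightarrow> (nat \<Rightarrow> real) set" where
  "torus n = {y. \<forall>j\<in>{1..n}. 0 \<le> y j \<and> y j < 2 * pi}"

definition dT :: "real \<Rightarrow> real \<Rightarrow> real" where
  "dT x y = min \<bar>x - y\<bar> (2 * pi - \<bar>x - y\<bar>)"

definition dTn :: "nat \<Rightarrow> (nat \<Rightarrow> real) \<Rightarrow> (nat \<Rightarrow> real) \<Rightarrow> real" where
  "dTn n x y = Max (insert 0 ((\<lambda>j. dT (x j) (y j)) ` {1..n}))"

definition Fsum :: "nat \<Rightarrow> (nat \<Rightarrow> real \<Rightarrow> ereal) \<Rightarrow> (nat \<Rightarrow> real) \<Rightarrow> real \<Rightarrow> ereal" where
  "Fsum n K y t = K 0 t + (\<Sum>j\<in>{1..n}. K j (t - y j))"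

definition node :: "nat \<Rightarrow> (nat \<Rightarrow> real) \<Rightarrow> nat \<Rightarrow> real" where
  "node n y j = (if j = 0 then 0 else if j = n + 1 then 2 * pi else y j)"

definition ext_perm :: "nat \<Rightarrow> (nat \<Rightarrow> nat) \<Rightarrow> nat \<Rightarrow> nat" where
  "ext_perm n \<sigma> k = (if k = 0 then 0 else if k = n + 1 then n + 1 else \<sigma> k)"

definition admissible :: "nat \<Rightarrow> (nat \<Rightarrow> real) \<Rightarrow> (nat \<Rightarrow> nat) \<Rightarrow> bool" where
  "admissible n y \<sigma> \<longleftrightarrow> \<sigma> permutes {1..n} \<and>
     (\<forall>k\<in>{0..n}. node n y (ext_perm n \<sigma> k) \<le> node n y (ext_perm n \<sigma> (k + 1)))"

definition m_arc :: "nat \<Rightarrow> (nat \<Rightarrow> real \<Rightarrow> ereal) \<Rightarrow> (nat \<Rightarrow> real) \<Rightarrow> (nat \<Rightarrow> nat) \<Rightarrow> nat \<Rightarrow> ereal" where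
  "m_arc n K y \<sigma> k = (SUP t\<in>{node n y (ext_perm n \<sigma> k) .. node n y (ext_perm n \<sigma> (k + 1))}. Fsum n K y t)"

definition m_upper :: "nat \<Rightarrow> (nat \<Rightarrow> real \<Rightarrow> ereal) \<Rightarrow> (nat \<Rightarrow> real) \<Rightarrow> ereal" where
  "m_upper n K y = (let \<sigma> = (SOME \<sigma>. admissible n y \<sigma>) in Max (m_arc n K y \<sigma> ` {0..n}))"

definition m_lower :: "nat \<Rightarrow> (nat \<Rightarrow> real \<Rightarrow> ereal) \<Rightarrow> (nat \<Rightarrow> real) \<Rightarrow> ereal" where
  "m_lower n K y = (let \<sigma> = (SOME \<sigma>. admissible n y \<sigma>) in Min (m_arc n K y \<sigma> ` {0..n}))"

definition open_simplex :: "nat \<Rightarrow> (nat \<Rightarrow> nat) \<Rightarrow> (nat \<Rightarrow> real) set" where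
  "open_simplex n \<sigma> = {y. \<forall>k\<in>{0..n}. node n y (ext_perm n \<sigma> k) < node n y (ext_perm n \<sigma> (k + 1))}"

end

theory Submission
  imports Defs
begin

text \<open>\<open>F(w, \<cdot>)\<close> is continuous and \<open>2\<pi>\<close>-periodic and attains its maximum
  \<open>m_upper n K w\<close>, but never at a node: the kernels with a pole there give the one-sided
  derivatives of \<open>F\<close> a positive jump \<open>D\<^sub>-K(0+) - D\<^sub>+K(2\<pi>-)\<close>, which under either regularity
  hypothesis the other summands cannot compensate. So every maximum point \<open>t\<close> lies inside
  an arc, where \<open>F\<close> is a sum of strictly concave functions, and there are supergradients
  \<open>c\<^sub>j\<close> of the summands at \<open>t\<close> with \<open>\<Sum>\<^sub>j c\<^sub>j = 0\<close>. If one of the \<open>n + 1\<close> arcs carried no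
  maximum point, there would be at most \<open>n\<close> such vectors \<open>c\<close>, hence a nonzero \<open>d \<in> \<real>\<^sup>n\<close>
  with \<open>\<Sum>\<^sub>j c\<^sub>j d\<^sub>j \<ge> 0\<close> for all of them. Moving the nodes by \<open>e d\<close> then lowers \<open>F\<close> strictly
  near every maximum point by concavity, everywhere by continuity and compactness, which
  contradicts local minimality. Hence every arc carries a maximum point: all arc maxima
  are equal and no arc is degenerate.\<close>

section \<open>One-sided derivatives of strictly concave functions\<close>

definition chord_slope :: "(real \<Rightarrow> real) \<Rightarrow> real \<Rightarrow> real \<Rightarrow> real" where
  "chord_slope g x y = (g y - g x) / (y - x)"

lemma chord_slope_strict_antimono:
  assumes sc: "strictly_concave_on {0<..<2*pi} g" and xyz: "0 < x" "x < y" "y < z" "z < 2*pi"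
  shows "chord_slope g x z < chord_slope g x y" "chord_slope g y z < chord_slope g x z"
proof -
  define u where "u = (y - x) / (z - x)"
  have u: "0 < u" "u < 1" using xyz by (auto simp: u_def field_simps)
  have zx: "z - x > 0" using xyz by simp
  have e1: "y - x = u * (z - x)" using zx by (simp add: u_def)
  have e2: "z - y = (1 - u) * (z - x)" using zx by (simp add: u_def field_simps)
  have yu: "y = (1 - u) * x + u * z" using e1 by (simp add: algebra_simps)
  have "(1 - u) * g x + u * g z < g ((1 - u) * x + u * z)"
    using sc xyz u unfolding strictly_concave_on_def by auto
  hence ineq: "(1 - u) * g x + u * g z < g y" using yu by simp
  have "u * (g z - g x) < g y - g x" using ineq by (simp add: algebra_simps)
  hence "u * (g z - g x) / (u * (z - x)) < (g y - g x) / (u * (z - x))"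
    using u zx by (intro divide_strict_right_mono) auto
  thus "chord_slope g x z < chord_slope g x y" unfolding chord_slope_def e1 using u zx by simp
  have "g z - g y < (1 - u) * (g z - g x)" using ineq by (simp add: algebra_simps)
  hence "(g z - g y) / ((1 - u) * (z - x)) < (1 - u) * (g z - g x) / ((1 - u) * (z - x))"
    using u zx by (intro divide_strict_right_mono) auto
  thus "chord_slope g y z < chord_slope g x z" unfolding chord_slope_def e2 using u zx by simp
qed

definition right_deriv :: "(real \<Rightarrow> real) \<Rightarrow> real \<Rightarrow> real" where
  "right_deriv g x = Sup (chord_slope g x ` {x<..<2*pi})"

definition left_deriv :: "(real \<Rightarrow> real) \<Rightarrow> real \<Rightarrow> real" where
  "left_deriv g x = Inf ((\<lambda>y. chord_slope g y x) ` {0<..<x})"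

lemma chord_slope_right_less_left:
  assumes sc: "strictly_concave_on {0<..<2*pi} g" and "0 < z" "z < x" "x < y" "y < 2*pi"
  shows "chord_slope g x y < chord_slope g z x"
  using chord_slope_strict_antimono[OF sc, of z x y] assms by linarith

lemma bdd_above_right_chord_slopes:
  assumes sc: "strictly_concave_on {0<..<2*pi} g" and x: "0 < x" "x < 2*pi"
  shows "bdd_above (chord_slope g x ` {x<..<2*pi})"
  using chord_slope_right_less_left[OF sc, of "x/2" x] x
  by (auto intro!: bdd_aboveI[of _ "chord_slope g (x/2) x"] less_imp_le)

lemma bdd_below_left_chord_slopes:
  assumes sc: "strictly_concave_on {0<..<2*pi} g" and x: "0 < x" "x < 2*pi"
  shows "bdd_below ((\<lambda>y. chord_slope g y x) ` {0<..<x})"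
  using chord_slope_right_less_left[OF sc, of _ x "(x + 2*pi)/2"] x
  by (auto intro!: bdd_belowI[of _ "chord_slope g x ((x + 2*pi)/2)"] less_imp_le)

lemma chord_slope_less_right_deriv:
  assumes sc: "strictly_concave_on {0<..<2*pi} g" and "0 < x" "x < y" "y < 2*pi"
  shows "chord_slope g x y < right_deriv g x"
proof -
  have "chord_slope g x y < chord_slope g x ((x+y)/2)"
    using chord_slope_strict_antimono[OF sc, of x "(x+y)/2" y] assms by auto
  also have "\<dots> \<le> right_deriv g x"
    unfolding right_deriv_def using assms bdd_above_right_chord_slopes[OF sc, of x]
    by (intro cSup_upper) auto
  finally show ?thesis .
qed

lemma left_deriv_less_chord_slope:
  assumes sc: "strictly_concave_on {0<..<2*pi} g" and "0 < z" "z < x" "x < 2*pi"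
  shows "left_deriv g x < chord_slope g z x"
proof -
  have "left_deriv g x \<le> chord_slope g ((z+x)/2) x"
    unfolding left_deriv_def using assms bdd_below_left_chord_slopes[OF sc, of x]
    by (intro cInf_lower) auto
  also have "\<dots> < chord_slope g z x" using chord_slope_strict_antimono[OF sc, of z "(z+x)/2" x] assms by auto
  finally show ?thesis .
qed

lemma right_deriv_le_left_deriv:
  assumes sc: "strictly_concave_on {0<..<2*pi} g" and x: "0 < x" "x < 2*pi"
  shows "right_deriv g x \<le> left_deriv g x"
  unfolding right_deriv_def left_deriv_def
proof (rule cSup_least)
  fix s assume "s \<in> chord_slope g x ` {x<..<2*pi}"
  then obtain y where y: "y \<in> {x<..<2*pi}" and s: "s = chord_slope g x y" by auto
  show "s \<le> Inf ((\<lambda>y. chord_slope g y x) ` {0<..<x})" unfolding s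
    by (rule cInf_greatest) (use x y chord_slope_right_less_left[OF sc, of _ x y] in \<open>auto intro: less_imp_le\<close>)
qed (use x in auto)

lemma left_deriv_less_right_deriv:
  assumes sc: "strictly_concave_on {0<..<2*pi} g" and "0 < x" "x < y" "y < 2*pi"
  shows "left_deriv g y < right_deriv g x"
  using left_deriv_less_chord_slope[OF sc, of x y] chord_slope_less_right_deriv[OF sc, of x y] assms
  by linarith

lemma left_deriv_antimono:
  assumes sc: "strictly_concave_on {0<..<2*pi} g" and "0 < x" "x \<le> y" "y < 2*pi"
  shows "left_deriv g y \<le> left_deriv g x"
  using left_deriv_less_right_deriv[OF sc, of x y] right_deriv_le_left_deriv[OF sc, of x] assms
  by (cases "x = y") auto

lemma right_deriv_antimono:
  assumes sc: "strictly_concave_on {0<..<2*pi} g" and "0 < x" "x \<le> y" "y < 2*pi"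
  shows "right_deriv g y \<le> right_deriv g x"
  using left_deriv_less_right_deriv[OF sc, of x y] right_deriv_le_left_deriv[OF sc, of y] assms
  by (cases "x = y") auto

lemma right_deriv_reflect_less_left_deriv:
  assumes sc: "strictly_concave_on {0<..<2*pi} g" and h: "0 < h" "h < pi"
  shows "right_deriv g (2*pi - h) < left_deriv g h"
  using right_deriv_le_left_deriv[OF sc, of "2*pi - h"] left_deriv_less_right_deriv[OF sc, of h "2*pi - h"]
    right_deriv_le_left_deriv[OF sc, of h] h
  by linarith

lemma right_deriv_tendsto:
  assumes sc: "strictly_concave_on {0<..<2*pi} g" and x: "0 < x" "x < 2*pi"
  shows "((\<lambda>h. (g (x+h) - g x) / h) \<longlongrightarrow> right_deriv g x) (at_right 0)"
proof (rule order_tendstoI)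
  have q: "(g (x+h) - g x) / h = chord_slope g x (x+h)" for h by (simp add: chord_slope_def)
  fix a assume "a < right_deriv g x"
  then obtain y where y: "x < y" "y < 2*pi" "a < chord_slope g x y"
    using less_cSupD[of "chord_slope g x ` {x<..<2*pi}" a] x by (auto simp: right_deriv_def)
  have "eventually (\<lambda>h. h \<in> {0<..<y - x}) (at_right 0)" using y by (intro eventually_at_right_real) auto
  thus "eventually (\<lambda>h. a < (g (x+h) - g x) / h) (at_right 0)"
  proof (rule eventually_mono)
    fix h assume "h \<in> {0<..<y - x}"
    hence "chord_slope g x y < chord_slope g x (x+h)"
      by (intro chord_slope_strict_antimono(1)[OF sc]) (use x y in auto)
    thus "a < (g (x+h) - g x) / h" using y(3) q[of h] by linarith
  qed
next
  have q: "(g (x+h) - g x) / h = chord_slope g x (x+h)" for h by (simp add: chord_slope_def)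
  fix a assume a: "right_deriv g x < a"
  have "eventually (\<lambda>h. h \<in> {0<..<2*pi - x}) (at_right 0)" using x by (intro eventually_at_right_real) auto
  thus "eventually (\<lambda>h. (g (x+h) - g x) / h < a) (at_right 0)"
  proof (rule eventually_mono)
    fix h assume "h \<in> {0<..<2*pi - x}"
    hence "chord_slope g x (x+h) < right_deriv g x" by (intro chord_slope_less_right_deriv[OF sc]) (use x in auto)
    thus "(g (x+h) - g x) / h < a" using a q[of h] by linarith
  qed
qed

lemma left_deriv_tendsto:
  assumes sc: "strictly_concave_on {0<..<2*pi} g" and x: "0 < x" "x < 2*pi"
  shows "((\<lambda>h. (g (x+h) - g x) / h) \<longlongrightarrow> left_deriv g x) (at_left 0)"
proof (rule order_tendstoI)
  have q: "h \<noteq> 0 \<Longrightarrow> (g (x+h) - g x) / h = chord_slope g (x+h) x" for h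
    by (simp add: chord_slope_def) (simp add: field_simps)
  fix a assume a: "a < left_deriv g x"
  have "eventually (\<lambda>h. h \<in> {-x<..<0}) (at_left 0)" using x by (intro eventually_at_left_real) auto
  thus "eventually (\<lambda>h. a < (g (x+h) - g x) / h) (at_left 0)"
  proof (rule eventually_mono)
    fix h assume h: "h \<in> {-x<..<0}"
    have "left_deriv g x < chord_slope g (x+h) x" by (rule left_deriv_less_chord_slope[OF sc]) (use h x in auto)
    thus "a < (g (x+h) - g x) / h" using a q[of h] h by auto
  qed
next
  have q: "h \<noteq> 0 \<Longrightarrow> (g (x+h) - g x) / h = chord_slope g (x+h) x" for h
    by (simp add: chord_slope_def) (simp add: field_simps)
  fix a assume "left_deriv g x < a"
  then obtain y where y: "0 < y" "y < x" "chord_slope g y x < a"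
    using cInf_lessD[of "(\<lambda>y. chord_slope g y x) ` {0<..<x}" a] x by (auto simp: left_deriv_def)
  have "eventually (\<lambda>h. h \<in> {y - x<..<0}) (at_left 0)" using y by (intro eventually_at_left_real) auto
  thus "eventually (\<lambda>h. (g (x+h) - g x) / h < a) (at_left 0)"
  proof (rule eventually_mono)
    fix h assume h: "h \<in> {y - x<..<0}"
    have "chord_slope g (x+h) x < chord_slope g y x"
      by (rule chord_slope_strict_antimono(2)[OF sc]) (use h y x in auto)
    thus "(g (x+h) - g x) / h < a" using y(3) q[of h] h by auto
  qed
qed

lemma strictly_concave_isCont:
  assumes sc: "strictly_concave_on {0<..<2*pi} g" and x: "0 < x" "x < 2*pi"
  shows "isCont g x"
proof -
  have e: "g (x + h) = g x + h * ((g (x+h) - g x) / h)" if "h \<noteq> 0" for h using that by simp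
  have r: "((\<lambda>h. g x + h * ((g (x+h) - g x) / h)) \<longlongrightarrow> g x + 0 * right_deriv g x) (at_right 0)"
    by (intro tendsto_intros right_deriv_tendsto[OF sc x])
  have l: "((\<lambda>h. g x + h * ((g (x+h) - g x) / h)) \<longlongrightarrow> g x + 0 * left_deriv g x) (at_left 0)"
    by (intro tendsto_intros left_deriv_tendsto[OF sc x])
  have r': "((\<lambda>h. g (x + h)) \<longlongrightarrow> g x) (at_right 0)"
    by (rule tendsto_cong[THEN iffD1, OF _ r[simplified]]) (use e in \<open>auto simp: eventually_at_filter\<close>)
  have l': "((\<lambda>h. g (x + h)) \<longlongrightarrow> g x) (at_left 0)"
    by (rule tendsto_cong[THEN iffD1, OF _ l[simplified]]) (use e in \<open>auto simp: eventually_at_filter\<close>)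
  show ?thesis unfolding isCont_iff by (rule filterlim_split_at[OF l' r'])
qed

lemma one_sided_derivs_eq_deriv:
  assumes sc: "strictly_concave_on {0<..<2*pi} g" and x: "0 < x" "x < 2*pi"
    and d: "(g has_real_derivative k) (at x)"
  shows "right_deriv g x = k" "left_deriv g x = k"
proof -
  have "((\<lambda>h. (g (x + h) - g x) / h) \<longlongrightarrow> k) (at 0)" using d by (simp add: DERIV_def)
  hence r: "((\<lambda>h. (g (x + h) - g x) / h) \<longlongrightarrow> k) (at_right 0)"
    and l: "((\<lambda>h. (g (x + h) - g x) / h) \<longlongrightarrow> k) (at_left 0)"
    by (simp_all add: filterlim_at_split)
  show "right_deriv g x = k" using tendsto_unique[OF _ right_deriv_tendsto[OF sc x] r] by simp
  show "left_deriv g x = k" using tendsto_unique[OF _ left_deriv_tendsto[OF sc x] l] by simp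
qed

lemma Dplus_Dminus_eq:
  assumes sc: "strictly_concave_on {0<..<2*pi} g" and x: "0 < x" "x < 2*pi"
  shows "Dplus g x = right_deriv g x" "Dminus g x = left_deriv g x"
  unfolding Dplus_def Dminus_def
  by (rule tendsto_Lim[OF _ right_deriv_tendsto[OF sc x]], simp)
     (rule tendsto_Lim[OF _ left_deriv_tendsto[OF sc x]], simp)

lemma mult_left_deriv_le_increment_at_0:
  assumes sc: "strictly_concave_on {0<..<2*pi} g" and lim: "(g \<longlongrightarrow> l) (at_right 0)"
    and h: "0 < h" "h < 2*pi"
  shows "h * left_deriv g h \<le> g h - l"
proof -
  have "eventually (\<lambda>u. u \<in> {0<..<h}) (at_right 0)" by (rule eventually_at_right_real) (use h in simp)
  hence ev: "eventually (\<lambda>u. 0 \<le> g h - g u - (h - u) * left_deriv g h) (at_right 0)"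
  proof (rule eventually_mono)
    fix u assume u: "u \<in> {0<..<h}"
    have "left_deriv g h < chord_slope g u h" by (rule left_deriv_less_chord_slope[OF sc]) (use u h in auto)
    hence "left_deriv g h * (h - u) < g h - g u" using u by (simp add: chord_slope_def field_simps)
    thus "0 \<le> g h - g u - (h - u) * left_deriv g h" by (simp add: algebra_simps)
  qed
  have "((\<lambda>u. g h - g u - (h - u) * left_deriv g h) \<longlongrightarrow> g h - l - (h - 0) * left_deriv g h) (at_right 0)"
    by (intro tendsto_intros lim)
  from tendsto_lowerbound[OF this ev] show ?thesis by simp
qed

lemma mult_right_deriv_le_increment_at_2pi:
  assumes sc: "strictly_concave_on {0<..<2*pi} g" and lim: "(g \<longlongrightarrow> l) (at_left (2*pi))"
    and h: "0 < h" "h < 2*pi"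
  shows "- h * right_deriv g (2*pi - h) \<le> g (2*pi - h) - l"
proof -
  define a where "a = 2*pi - h"
  have "eventually (\<lambda>u. u \<in> {a<..<2*pi}) (at_left (2*pi))"
    by (rule eventually_at_left_real) (use h in \<open>simp add: a_def\<close>)
  hence ev: "eventually (\<lambda>u. g u - g a - (u - a) * right_deriv g a \<le> 0) (at_left (2*pi))"
  proof (rule eventually_mono)
    fix u assume u: "u \<in> {a<..<2*pi}"
    have "chord_slope g a u < right_deriv g a"
      by (rule chord_slope_less_right_deriv[OF sc]) (use u h in \<open>auto simp: a_def\<close>)
    hence "g u - g a < right_deriv g a * (u - a)" using u by (simp add: chord_slope_def field_simps)
    thus "g u - g a - (u - a) * right_deriv g a \<le> 0" by (simp add: algebra_simps)
  qed
  have "((\<lambda>u. g u - g a - (u - a) * right_deriv g a) \<longlongrightarrow> l - g a - (2*pi - a) * right_deriv g a)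
      (at_left (2*pi))"
    by (intro tendsto_intros lim)
  from tendsto_upperbound[OF this ev] show ?thesis by (simp add: a_def algebra_simps)
qed

lemma mult_one_sided_derivs_le_increments:
  assumes sc: "strictly_concave_on {0<..<2*pi} g" and h: "0 < h" "0 < q - h" "q + h < 2*pi"
  shows "h * left_deriv g (q + h) \<le> g (q + h) - g q" "- h * right_deriv g (q - h) \<le> g (q - h) - g q"
  using left_deriv_less_chord_slope[OF sc, of q "q + h"] chord_slope_less_right_deriv[OF sc, of "q - h" q] h
  by (auto simp: chord_slope_def field_simps)

lemma supergradient_less:
  assumes sc: "strictly_concave_on {0<..<2*pi} g" and x: "0 < x" "x < 2*pi"
    and c: "right_deriv g x \<le> c" "c \<le> left_deriv g x" and s: "0 < s" "s < 2*pi" "s \<noteq> x"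
  shows "g s < g x + c * (s - x)"
proof (cases "x < s")
  case True
  hence "(g s - g x) / (s - x) < c"
    using chord_slope_less_right_deriv[OF sc x(1) True s(2)] c by (simp add: chord_slope_def)
  thus ?thesis using True by (simp add: field_simps)
next
  case False
  hence xs: "s < x" using s by simp
  hence "c < (g x - g s) / (x - s)"
    using left_deriv_less_chord_slope[OF sc s(1) xs x(2)] c by (simp add: chord_slope_def)
  thus ?thesis using xs by (simp add: field_simps)
qed

lemma supergradient_le:
  assumes sc: "strictly_concave_on {0<..<2*pi} g" and x: "0 < x" "x < 2*pi"
    and c: "right_deriv g x \<le> c" "c \<le> left_deriv g x" and s: "0 < s" "s < 2*pi"
  shows "g s \<le> g x + c * (s - x)"
  using supergradient_less[OF sc x c s] by (cases "s = x") (auto intro: less_imp_le)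

lemma sum_supergradient_less:
  fixes g :: "'i \<Rightarrow> real \<Rightarrow> real"
  assumes fin: "finite I" and sc: "\<And>j. j \<in> I \<Longrightarrow> strictly_concave_on {0<..<2*pi} (g j)"
    and x: "\<And>j. j \<in> I \<Longrightarrow> 0 < x j \<and> x j < 2*pi" and s: "\<And>j. j \<in> I \<Longrightarrow> 0 < s j \<and> s j < 2*pi"
    and c: "\<And>j. j \<in> I \<Longrightarrow> right_deriv (g j) (x j) \<le> c j \<and> c j \<le> left_deriv (g j) (x j)"
    and ne: "\<exists>j\<in>I. s j \<noteq> x j"
  shows "(\<Sum>j\<in>I. g j (s j)) < (\<Sum>j\<in>I. g j (x j)) + (\<Sum>j\<in>I. c j * (s j - x j))"
proof -
  have "(\<Sum>j\<in>I. g j (s j)) < (\<Sum>j\<in>I. g j (x j) + c j * (s j - x j))"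
  proof (rule sum_strict_mono_ex1[OF fin])
    show "\<forall>j\<in>I. g j (s j) \<le> g j (x j) + c j * (s j - x j)"
      using supergradient_le[OF sc] x s c by blast
    show "\<exists>j\<in>I. g j (s j) < g j (x j) + c j * (s j - x j)"
      using supergradient_less[OF sc] x s c ne by blast
  qed
  thus ?thesis by (simp add: sum.distrib)
qed

lemma sum_one_sided_derivs_at_local_max:
  fixes g :: "'i \<Rightarrow> real \<Rightarrow> real"
  assumes sc: "\<And>j. j \<in> I \<Longrightarrow> strictly_concave_on {0<..<2*pi} (g j)"
    and s: "\<And>j. j \<in> I \<Longrightarrow> 0 < s j \<and> s j < 2*pi" and d: "0 < \<delta>"
    and mx: "\<And>\<tau>. \<bar>\<tau>\<bar> < \<delta> \<Longrightarrow> (\<Sum>j\<in>I. g j (s j + \<tau>)) \<le> (\<Sum>j\<in>I. g j (s j))"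
  shows "(\<Sum>j\<in>I. right_deriv (g j) (s j)) \<le> 0" "0 \<le> (\<Sum>j\<in>I. left_deriv (g j) (s j))"
proof -
  define Q where "Q h = (\<Sum>j\<in>I. (g j (s j + h) - g j (s j)) / h)" for h
  have Q: "Q h = ((\<Sum>j\<in>I. g j (s j + h)) - (\<Sum>j\<in>I. g j (s j))) / h" for h
    by (simp add: Q_def sum_divide_distrib[symmetric] sum_subtractf[symmetric])
  have "(Q \<longlongrightarrow> (\<Sum>j\<in>I. right_deriv (g j) (s j))) (at_right 0)"
    unfolding Q_def by (rule tendsto_sum) (use right_deriv_tendsto[OF sc] s in auto)
  moreover have "eventually (\<lambda>h. Q h \<le> 0) (at_right 0)"
    using eventually_at_right_real[OF d]
    by (rule eventually_mono) (use mx in \<open>auto simp: Q divide_nonpos_pos\<close>)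
  ultimately show "(\<Sum>j\<in>I. right_deriv (g j) (s j)) \<le> 0" by (rule tendsto_upperbound) simp
  have "(Q \<longlongrightarrow> (\<Sum>j\<in>I. left_deriv (g j) (s j))) (at_left 0)"
    unfolding Q_def by (rule tendsto_sum) (use left_deriv_tendsto[OF sc] s in auto)
  moreover have "eventually (\<lambda>h. h \<in> {-\<delta><..<0}) (at_left 0)"
    by (rule eventually_at_left_real) (use d in simp)
  hence "eventually (\<lambda>h. 0 \<le> Q h) (at_left 0)"
    by (rule eventually_mono) (use mx in \<open>auto simp: Q divide_nonpos_neg\<close>)
  ultimately show "0 \<le> (\<Sum>j\<in>I. left_deriv (g j) (s j))" by (rule tendsto_lowerbound) simp
qed

lemma exists_between_sum_eq_0:
  fixes a b :: "'i \<Rightarrow> real"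
  assumes ab: "\<And>j. j \<in> I \<Longrightarrow> a j \<le> b j" and sa: "sum a I \<le> 0" and sb: "0 \<le> sum b I"
  shows "\<exists>c. sum c I = 0 \<and> (\<forall>j\<in>I. a j \<le> c j \<and> c j \<le> b j)"
proof -
  define \<theta> where "\<theta> = (if sum b I = sum a I then 0 else - sum a I / (sum b I - sum a I))"
  have \<theta>: "0 \<le> \<theta>" "\<theta> \<le> 1" and sum_eq: "sum a I + \<theta> * (sum b I - sum a I) = 0"
    using sa sb by (auto simp: \<theta>_def field_simps)
  define c where "c j = a j + \<theta> * (b j - a j)" for j
  have "sum c I = 0"
    using sum_eq by (simp add: c_def sum.distrib sum_distrib_left sum_subtractf algebra_simps)
  moreover have "a j \<le> c j \<and> c j \<le> b j" if "j \<in> I" for j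
    using ab[OF that] \<theta> mult_left_le_one_le[of "b j - a j" \<theta>] by (auto simp: c_def)
  ultimately show ?thesis by blast
qed

lemma balanced_supergradient_at_local_max:
  fixes g :: "'i \<Rightarrow> real \<Rightarrow> real"
  assumes sc: "\<And>j. j \<in> I \<Longrightarrow> strictly_concave_on {0<..<2*pi} (g j)"
    and s: "\<And>j. j \<in> I \<Longrightarrow> 0 < s j \<and> s j < 2*pi" and d: "0 < \<delta>"
    and mx: "\<And>\<tau>. \<bar>\<tau>\<bar> < \<delta> \<Longrightarrow> (\<Sum>j\<in>I. g j (s j + \<tau>)) \<le> (\<Sum>j\<in>I. g j (s j))"
  shows "\<exists>c. (\<Sum>j\<in>I. c j) = 0 \<and>
    (\<forall>j\<in>I. right_deriv (g j) (s j) \<le> c j \<and> c j \<le> left_deriv (g j) (s j))"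
  by (rule exists_between_sum_eq_0)
     (use right_deriv_le_left_deriv[OF sc] s sum_one_sided_derivs_at_local_max[OF sc s d mx] in auto)

section \<open>Homogeneous linear inequalities\<close>

lemma exists_nonzero_solution:
  fixes c :: "'k \<Rightarrow> 'i \<Rightarrow> real"
  assumes "finite S" "finite I" "card S < card I"
  shows "\<exists>d. (\<exists>j\<in>I. d j \<noteq> 0) \<and> (\<forall>k\<in>S. (\<Sum>j\<in>I. c k j * d j) = 0)"
  using assms
proof (induction S arbitrary: I c rule: finite_induct)
  case empty
  then obtain a where "a \<in> I" by fastforce
  thus ?case by (intro exI[of _ "\<lambda>j. 1"]) auto
next
  case (insert k0 S)
  show ?case
  proof (cases "\<forall>j\<in>I. c k0 j = 0")
    case True
    have "card S < card I" using insert.prems insert.hyps by simp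
    then obtain d where "\<exists>j\<in>I. d j \<noteq> 0" "\<forall>k\<in>S. (\<Sum>j\<in>I. c k j * d j) = 0"
      using insert.IH[of I c] insert.prems by blast
    thus ?thesis using True by auto
  next
    case False
    then obtain a where a: "a \<in> I" "c k0 a \<noteq> 0" by auto
    define I' where "I' = I - {a}"
    have "card S < card I'" using insert a by (simp add: I'_def)
    moreover define c' where "c' k j = c k j - c k a * c k0 j / c k0 a" for k j
    ultimately obtain u where u: "\<exists>j\<in>I'. u j \<noteq> 0" "\<forall>k\<in>S. (\<Sum>j\<in>I'. c' k j * u j) = 0"
      using insert.IH[of I' c'] insert.prems by (auto simp: I'_def)
    \<comment> \<open>eliminate the variable \<open>a\<close> using the constraint \<open>k0\<close>\<close>
    define d where "d = u(a := - (\<Sum>j\<in>I'. c k0 j * u j) / c k0 a)"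
    have d_I': "(\<Sum>j\<in>I'. f j * d j) = (\<Sum>j\<in>I'. f j * u j)" for f
      by (rule sum.cong) (auto simp: d_def I'_def)
    have split_a: "(\<Sum>j\<in>I. f j * d j) = f a * d a + (\<Sum>j\<in>I'. f j * u j)" for f
    proof -
      have "(\<Sum>j\<in>I. f j * d j) = f a * d a + (\<Sum>j\<in>I'. f j * d j)"
        unfolding I'_def by (rule sum.remove) (use a insert.prems in auto)
      thus ?thesis using d_I'[of f] by (simp add: d_def)
    qed
    have reduce: "(\<Sum>j\<in>I. c k j * d j) = (\<Sum>j\<in>I'. c' k j * u j)" for k
    proof -
      have "(\<Sum>j\<in>I. c k j * d j) = (\<Sum>j\<in>I'. c k j * u j) - c k a * (\<Sum>j\<in>I'. c k0 j * u j) / c k0 a"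
        unfolding split_a by (simp add: d_def)
      also have "\<dots> = (\<Sum>j\<in>I'. c k j * u j) - c k a / c k0 a * (\<Sum>j\<in>I'. c k0 j * u j)"
        by simp
      also have "\<dots> = (\<Sum>j\<in>I'. c k j * u j - c k a / c k0 a * (c k0 j * u j))"
        by (simp add: sum_subtractf sum_distrib_left)
      also have "\<dots> = (\<Sum>j\<in>I'. c' k j * u j)"
        by (rule sum.cong) (simp_all add: c'_def algebra_simps)
      finally show ?thesis .
    qed
    have "(\<Sum>j\<in>I. c k0 j * d j) = 0" using a unfolding split_a by (simp add: d_def)
    hence "\<forall>k\<in>insert k0 S. (\<Sum>j\<in>I. c k j * d j) = 0" using u(2) reduce by simp
    moreover have "\<exists>j\<in>I. d j \<noteq> 0" using u(1) by (auto simp: d_def I'_def)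
    ultimately show ?thesis by blast
  qed
qed

lemma exists_nonzero_nonneg_solution:
  fixes c :: "'k \<Rightarrow> 'i \<Rightarrow> real"
  assumes "finite S" "finite I" "I \<noteq> {}" "card S \<le> card I"
  shows "\<exists>d. (\<exists>j\<in>I. d j \<noteq> 0) \<and> (\<forall>k\<in>S. 0 \<le> (\<Sum>j\<in>I. c k j * d j))"
proof (cases "S = {}")
  case True
  thus ?thesis using assms(3) by (intro exI[of _ "\<lambda>j. 1"]) auto
next
  case False
  then obtain k0 where k0: "k0 \<in> S" by auto
  have "card (S - {k0}) < card S" using assms(1) k0 by (rule card_Diff1_less)
  hence "card (S - {k0}) < card I" using assms(4) by linarith
  then obtain d where d: "\<exists>j\<in>I. d j \<noteq> 0" "\<forall>k\<in>S - {k0}. (\<Sum>j\<in>I. c k j * d j) = 0"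
    using exists_nonzero_solution[of "S - {k0}" I c] assms(1,2) by blast
  \<comment> \<open>the one remaining constraint is met by choosing the sign of \<open>d\<close>\<close>
  define \<epsilon> where "\<epsilon> = (if 0 \<le> (\<Sum>j\<in>I. c k0 j * d j) then 1 else - 1 :: real)"
  have scale: "(\<Sum>j\<in>I. c k j * (\<epsilon> * d j)) = \<epsilon> * (\<Sum>j\<in>I. c k j * d j)" for k
    by (simp add: sum_distrib_left mult.left_commute)
  have "0 \<le> (\<Sum>j\<in>I. c k j * (\<epsilon> * d j))" if "k \<in> S" for k
  proof (cases "k = k0")
    case True thus ?thesis unfolding scale by (simp add: \<epsilon>_def)
  next
    case False thus ?thesis unfolding scale using d(2) that by simp
  qed
  moreover have "\<exists>j\<in>I. \<epsilon> * d j \<noteq> 0" using d(1) by (auto simp: \<epsilon>_def)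
  ultimately show ?thesis by (intro exI[of _ "\<lambda>j. \<epsilon> * d j"]) blast
qed

section \<open>No maximum at a kink\<close>

definition pole_gap :: "(nat \<Rightarrow> real \<Rightarrow> real) \<Rightarrow> nat set \<Rightarrow> real \<Rightarrow> real" where
  "pole_gap g J h = (\<Sum>j\<in>J. left_deriv (g j) h - right_deriv (g j) (2*pi - h))"

definition regular_gap :: "(nat \<Rightarrow> real \<Rightarrow> real) \<Rightarrow> nat set \<Rightarrow> (nat \<Rightarrow> real) \<Rightarrow> real \<Rightarrow> real" where
  "regular_gap g R q h = (\<Sum>j\<in>R. left_deriv (g j) (q j + h) - right_deriv (g j) (q j - h))"

text \<open>The situation at a node \<open>p\<close> of \<open>F\<close> where the maximum is attained, read in the local
  variable \<open>h = t - p\<close>: the kernels \<open>g\<^sub>j\<close>, \<open>j \<in> J\<close>, have their pole at \<open>p\<close> and boundary value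
  \<open>l\<^sub>j\<close>, the others are regular at distance \<open>q\<^sub>j\<close> from their pole, and \<open>ineq\<close> sums the two
  conditions \<open>F(p \<plusminus> h) \<le> F(p)\<close>.\<close>

locale kink_setting =
  fixes g :: "nat \<Rightarrow> real \<Rightarrow> real" and J R :: "nat set" and q l :: "nat \<Rightarrow> real" and h0 :: real
  assumes finite_J: "finite J" and J_nonempty: "J \<noteq> {}"
    and concave: "\<And>j. j \<in> J \<union> R \<Longrightarrow> strictly_concave_on {0<..<2*pi} (g j)"
    and lim_0: "\<And>j. j \<in> J \<Longrightarrow> (g j \<longlongrightarrow> l j) (at_right 0)"
    and lim_2pi: "\<And>j. j \<in> J \<Longrightarrow> (g j \<longlongrightarrow> l j) (at_left (2*pi))"
    and q_bounds: "\<And>j. j \<in> R \<Longrightarrow> h0 \<le> q j \<and> h0 \<le> 2*pi - q j"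
    and h0: "0 < h0" "h0 \<le> pi"
    and ineq: "\<And>h. 0 < h \<Longrightarrow> h < h0 \<Longrightarrow>
       (\<Sum>j\<in>J. g j h + g j (2*pi - h) - 2 * l j) + (\<Sum>j\<in>R. g j (q j + h) + g j (q j - h) - 2 * g j (q j)) \<le> 0"
begin

lemma gaps_sum_nonpos:
  assumes h: "0 < h" "h < h0"
  shows "pole_gap g J h + regular_gap g R q h \<le> 0"
proof -
  have "h * (pole_gap g J h + regular_gap g R q h) =
      (\<Sum>j\<in>J. h * left_deriv (g j) h + (- h) * right_deriv (g j) (2*pi - h))
      + (\<Sum>j\<in>R. h * left_deriv (g j) (q j + h) + (-h) * right_deriv (g j) (q j - h))"
    by (simp add: pole_gap_def regular_gap_def sum_distrib_left algebra_simps)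
  also have "\<dots> \<le> (\<Sum>j\<in>J. g j h + g j (2*pi - h) - 2 * l j)
      + (\<Sum>j\<in>R. g j (q j + h) + g j (q j - h) - 2 * g j (q j))"
  proof (rule add_mono; rule sum_mono)
    fix j assume j: "j \<in> J"
    show "h * left_deriv (g j) h + (- h) * right_deriv (g j) (2*pi - h) \<le> g j h + g j (2*pi - h) - 2 * l j"
      using mult_left_deriv_le_increment_at_0[OF concave lim_0, of j h]
        mult_right_deriv_le_increment_at_2pi[OF concave lim_2pi, of j h] j h h0 by auto
  next
    fix j assume j: "j \<in> R"
    have b: "0 < q j - h" "q j + h < 2*pi" using q_bounds[OF j] h by auto
    have "strictly_concave_on {0<..<2*pi} (g j)" using concave j by blast
    from mult_one_sided_derivs_le_increments[OF this h(1) b]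
    show "h * left_deriv (g j) (q j + h) + (-h) * right_deriv (g j) (q j - h)
        \<le> g j (q j + h) + g j (q j - h) - 2 * g j (q j)" by simp
  qed
  also have "\<dots> \<le> 0" by (rule ineq[OF h])
  finally show ?thesis using h by (simp add: mult_le_0_iff)
qed

lemma pole_gap_antimono:
  assumes h: "0 < h" "h \<le> h1" "h1 < pi"
  shows "pole_gap g J h1 \<le> pole_gap g J h"
  unfolding pole_gap_def
proof (rule sum_mono)
  fix j assume j: "j \<in> J"
  have "left_deriv (g j) h1 \<le> left_deriv (g j) h"
    by (rule left_deriv_antimono[OF concave]) (use j h in auto)
  moreover have "right_deriv (g j) (2*pi - h) \<le> right_deriv (g j) (2*pi - h1)"
    by (rule right_deriv_antimono[OF concave]) (use j h in auto)
  ultimately show "left_deriv (g j) h1 - right_deriv (g j) (2*pi - h1)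
      \<le> left_deriv (g j) h - right_deriv (g j) (2*pi - h)" by simp
qed

lemma regular_gap_antimono:
  assumes h: "0 < h" "h \<le> h1" "h1 < h0"
  shows "regular_gap g R q h1 \<le> regular_gap g R q h"
  unfolding regular_gap_def
proof (rule sum_mono)
  fix j assume j: "j \<in> R"
  have b: "h0 \<le> q j" "h0 \<le> 2*pi - q j" using q_bounds[OF j] by auto
  have "left_deriv (g j) (q j + h1) \<le> left_deriv (g j) (q j + h)"
    by (rule left_deriv_antimono[OF concave]) (use j h b in auto)
  moreover have "right_deriv (g j) (q j - h) \<le> right_deriv (g j) (q j - h1)"
    by (rule right_deriv_antimono[OF concave]) (use j h b in auto)
  ultimately show "left_deriv (g j) (q j + h1) - right_deriv (g j) (q j - h1)
      \<le> left_deriv (g j) (q j + h) - right_deriv (g j) (q j - h)" by simp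
qed

lemma pole_gap_ge_term:
  assumes j0: "j0 \<in> J" and h: "0 < h" "h < pi"
  shows "left_deriv (g j0) h - right_deriv (g j0) (2*pi - h) \<le> pole_gap g J h"
proof -
  have "pole_gap g J h = (left_deriv (g j0) h - right_deriv (g j0) (2*pi - h))
      + (\<Sum>j\<in>J - {j0}. left_deriv (g j) h - right_deriv (g j) (2*pi - h))"
    unfolding pole_gap_def by (rule sum.remove[OF finite_J j0])
  moreover have "0 \<le> (\<Sum>j\<in>J - {j0}. left_deriv (g j) h - right_deriv (g j) (2*pi - h))"
  proof (rule sum_nonneg)
    fix j assume "j \<in> J - {j0}"
    thus "0 \<le> left_deriv (g j) h - right_deriv (g j) (2*pi - h)"
      using right_deriv_reflect_less_left_deriv[OF concave, of j h] h by auto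
  qed
  ultimately show ?thesis by simp
qed

lemma pole_gap_pos:
  assumes h: "0 < h" "h < pi"
  shows "0 < pole_gap g J h"
proof -
  obtain j0 where j0: "j0 \<in> J" using J_nonempty by blast
  have "0 < left_deriv (g j0) h - right_deriv (g j0) (2*pi - h)"
    using right_deriv_reflect_less_left_deriv[OF concave, of j0 h] j0 h by auto
  thus ?thesis using pole_gap_ge_term[OF j0 h] by linarith
qed

text \<open>The pole gap is positive and grows as \<open>h\<close> decreases to \<open>0\<close>, while \<open>gaps_sum_nonpos\<close>
  bounds it by minus the regular gap; each of the two regularity hypotheses makes this
  impossible.\<close>

lemma regular_gap_not_tendsto_0: "\<not> (regular_gap g R q \<longlongrightarrow> 0) (at_right 0)"
proof
  assume lim: "(regular_gap g R q \<longlongrightarrow> 0) (at_right 0)"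
  define h1 where "h1 = h0 / 2"
  have h1: "0 < h1" "h1 < h0" "h1 < pi" using h0 by (auto simp: h1_def)
  have \<beta>: "0 < pole_gap g J h1" by (rule pole_gap_pos) (use h1 in auto)
  have "eventually (\<lambda>h. - pole_gap g J h1 < regular_gap g R q h \<and> h \<in> {0<..<h1}) (at_right 0)"
    using order_tendstoD(1)[OF lim, of "- pole_gap g J h1"] \<beta> eventually_at_right_real[OF h1(1)]
    by (auto intro: eventually_conj)
  then obtain h where h: "- pole_gap g J h1 < regular_gap g R q h" "0 < h" "h < h1"
    using eventually_happens[of _ "at_right (0::real)"] by auto
  have "pole_gap g J h1 \<le> pole_gap g J h" by (rule pole_gap_antimono) (use h h1 in auto)
  thus False using gaps_sum_nonpos[of h] h h1 by simp
qed

lemma pole_term_le_regular_gap: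
  assumes j0: "j0 \<in> J" and h: "0 < h" "h \<le> h0 / 2"
  shows "left_deriv (g j0) h - right_deriv (g j0) (2*pi - h) \<le> - regular_gap g R q (h0 / 2)"
proof -
  have "regular_gap g R q (h0 / 2) \<le> regular_gap g R q h" by (rule regular_gap_antimono) (use h h0 in auto)
  moreover have "left_deriv (g j0) h - right_deriv (g j0) (2*pi - h) \<le> pole_gap g J h"
    by (rule pole_gap_ge_term[OF j0]) (use h h0 in auto)
  ultimately show ?thesis using gaps_sum_nonpos[of h] h h0 by simp
qed

lemma pole_right_deriv_not_tendsto_bot:
  assumes j0: "j0 \<in> J"
  shows "\<not> filterlim (right_deriv (g j0)) at_bot (at_left (2*pi))"
proof
  define h1 where "h1 = h0 / 2"
  have h1: "0 < h1" "h1 < pi" using h0 by (auto simp: h1_def)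
  define G where "G = regular_gap g R q h1"
  assume "filterlim (right_deriv (g j0)) at_bot (at_left (2*pi))"
  hence "eventually (\<lambda>x. right_deriv (g j0) x < left_deriv (g j0) h1 + G) (at_left (2*pi))"
    by (simp add: filterlim_at_bot_dense)
  then obtain b where b: "b < 2*pi" "\<And>y. b < y \<Longrightarrow> y < 2*pi \<Longrightarrow> right_deriv (g j0) y < left_deriv (g j0) h1 + G"
    unfolding eventually_at_left_field by blast
  define h where "h = min h1 (2*pi - b) / 2"
  have "0 < min h1 (2*pi - b)" "min h1 (2*pi - b) \<le> h1" "min h1 (2*pi - b) \<le> 2*pi - b"
    "2 * h = min h1 (2*pi - b)" using h1 b by (auto simp: h_def)
  hence h: "0 < h" "h \<le> h1" "b < 2*pi - h" by linarith+
  have "left_deriv (g j0) h1 \<le> left_deriv (g j0) h"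
    by (rule left_deriv_antimono[OF concave]) (use j0 h h1 in auto)
  thus False using b(2)[of "2*pi - h"] pole_term_le_regular_gap[OF j0, of h] h by (simp add: G_def h1_def)
qed

lemma pole_left_deriv_not_tendsto_top:
  assumes j0: "j0 \<in> J"
  shows "\<not> filterlim (left_deriv (g j0)) at_top (at_right 0)"
proof
  define h1 where "h1 = h0 / 2"
  have h1: "0 < h1" "h1 < pi" using h0 by (auto simp: h1_def)
  define G where "G = regular_gap g R q h1"
  assume "filterlim (left_deriv (g j0)) at_top (at_right 0)"
  hence "eventually (\<lambda>x. right_deriv (g j0) (2*pi - h1) - G < left_deriv (g j0) x) (at_right 0)"
    by (simp add: filterlim_at_top_dense)
  then obtain b where b: "0 < b" "\<And>y. 0 < y \<Longrightarrow> y < b \<Longrightarrow> right_deriv (g j0) (2*pi - h1) - G < left_deriv (g j0) y"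
    unfolding eventually_at_right_field by blast
  define h where "h = min h1 b / 2"
  have "0 < min h1 b" "min h1 b \<le> h1" "min h1 b \<le> b" "2 * h = min h1 b"
    using h1 b by (auto simp: h_def)
  hence h: "0 < h" "h \<le> h1" "h < b" by linarith+
  have "right_deriv (g j0) (2*pi - h) \<le> right_deriv (g j0) (2*pi - h1)"
    by (rule right_deriv_antimono[OF concave]) (use j0 h h1 in auto)
  thus False using b(2)[of h] pole_term_le_regular_gap[OF j0, of h] h by (simp add: G_def h1_def)
qed

end

lemma regular_gap_tendsto_0:
  assumes concave: "\<And>j. j \<in> R \<Longrightarrow> strictly_concave_on {0<..<2*pi} (g j)"
    and deriv: "\<And>j t. j \<in> R \<Longrightarrow> 0 < t \<Longrightarrow> t < 2*pi \<Longrightarrow> (g j has_real_derivative g' j t) (at t)"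
    and cont: "\<And>j. j \<in> R \<Longrightarrow> continuous_on {0<..<2*pi} (g' j)"
    and q: "\<And>j. j \<in> R \<Longrightarrow> 0 < q j \<and> q j < 2*pi"
  shows "(regular_gap g R q \<longlongrightarrow> 0) (at_right 0)"
proof -
  have "((\<lambda>h. left_deriv (g j) (q j + h) - right_deriv (g j) (q j - h)) \<longlongrightarrow> 0) (at_right 0)"
    if j: "j \<in> R" for j
  proof -
    have ic: "isCont (g' j) (q j)"
      using cont[OF j] q[OF j] continuous_on_eq_continuous_at[of "{0<..<2*pi}" "g' j"] by auto
    have "((\<lambda>h. q j + h) \<longlongrightarrow> q j) (at_right 0)" "((\<lambda>h. q j - h) \<longlongrightarrow> q j) (at_right 0)"
      using tendsto_add[OF tendsto_const tendsto_ident_at, of "q j" 0 "{0<..}"]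
        tendsto_diff[OF tendsto_const tendsto_ident_at, of "q j" 0 "{0<..}"] by simp_all
    hence "((\<lambda>h. g' j (q j + h) - g' j (q j - h)) \<longlongrightarrow> g' j (q j) - g' j (q j)) (at_right 0)"
      by (intro tendsto_diff isCont_tendsto_compose[OF ic])
    hence lim: "((\<lambda>h. g' j (q j + h) - g' j (q j - h)) \<longlongrightarrow> 0) (at_right 0)" by simp
    have "eventually (\<lambda>h. h \<in> {0<..<min (q j) (2*pi - q j)}) (at_right 0)"
      by (rule eventually_at_right_real) (use q[OF j] in auto)
    hence "eventually (\<lambda>h. g' j (q j + h) - g' j (q j - h)
        = left_deriv (g j) (q j + h) - right_deriv (g j) (q j - h)) (at_right 0)"
    proof (rule eventually_mono)
      fix h assume h: "h \<in> {0<..<min (q j) (2*pi - q j)}"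
      hence "0 < q j + h" "q j + h < 2*pi" "0 < q j - h" "q j - h < 2*pi" by auto
      thus "g' j (q j + h) - g' j (q j - h) = left_deriv (g j) (q j + h) - right_deriv (g j) (q j - h)"
        using one_sided_derivs_eq_deriv[OF concave[OF j] _ _ deriv[OF j]] by simp
    qed
    from tendsto_cong[OF this] lim show ?thesis by simp
  qed
  hence "((\<lambda>h. \<Sum>j\<in>R. left_deriv (g j) (q j + h) - right_deriv (g j) (q j - h)) \<longlongrightarrow> (\<Sum>j\<in>R. 0)) (at_right 0)"
    by (rule tendsto_sum)
  moreover have "(\<lambda>h. \<Sum>j\<in>R. left_deriv (g j) (q j + h) - right_deriv (g j) (q j - h)) = regular_gap g R q"
    by (simp add: regular_gap_def fun_eq_iff)
  ultimately show ?thesis by simp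
qed

section \<open>Kernels and the function \<open>F\<close>\<close>

lemma strictly_concave_kernel_kr:
  "strictly_concave_kernel K \<Longrightarrow> strictly_concave_on {0<..<2*pi} (kr K)"
  by (simp add: strictly_concave_kernel_def)

lemma kernel_periodic: "strictly_concave_kernel K \<Longrightarrow> K (t + 2*pi) = K t"
  unfolding strictly_concave_kernel_def concave_kernel_def by blast

lemma kernel_periodic_int:
  assumes "strictly_concave_kernel K"
  shows "K (t + 2*pi * of_int m) = K t"
proof -
  have nat: "K (s + 2*pi * real k) = K s" for s k
  proof (induction k)
    case (Suc k)
    have "s + 2*pi * real (Suc k) = (s + 2*pi * real k) + 2*pi" by (simp add: algebra_simps)
    thus ?case using kernel_periodic[OF assms, of "s + 2*pi * real k"] Suc by (simp only:)
  qed simp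
  show ?thesis
  proof (cases "m \<ge> 0")
    case True thus ?thesis using nat[of t "nat m"] by simp
  next
    case False thus ?thesis using nat[of "t + 2*pi * of_int m" "nat (- m)"] by simp
  qed
qed

lemma kernel_eq_kr:
  "strictly_concave_kernel K \<Longrightarrow> 0 < t \<Longrightarrow> t < 2*pi \<Longrightarrow> K t = ereal (kr K t)"
  by (auto simp: strictly_concave_kernel_def concave_kernel_def kr_def ereal_real')

lemma kernel_boundary_limit:
  assumes "strictly_concave_kernel K"
  obtains L where "L \<noteq> \<infinity>" "(K \<longlongrightarrow> L) (at_right 0)" "(K \<longlongrightarrow> L) (at_left (2 * pi))" "K 0 = L"
  using assms by (auto simp: strictly_concave_kernel_def concave_kernel_def)

definition mod2pi :: "real \<Rightarrow> real" where
  "mod2pi t = t - 2*pi * of_int \<lfloor>t / (2*pi)\<rfloor>"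

lemma mod2pi_bounds: "0 \<le> mod2pi t" "mod2pi t < 2*pi"
  using floor_divide_lower[of "2*pi" t] floor_divide_upper[of "2*pi" t]
  by (simp_all add: mod2pi_def algebra_simps)

lemma kernel_neq_PInf:
  assumes "strictly_concave_kernel K"
  shows "K t \<noteq> \<infinity>"
proof -
  have "K t = K (mod2pi t)"
    using kernel_periodic_int[OF assms, of "mod2pi t" "\<lfloor>t / (2*pi)\<rfloor>"] by (simp add: mod2pi_def)
  moreover obtain L where "L \<noteq> \<infinity>" "K 0 = L" using kernel_boundary_limit[OF assms] by metis
  hence "K (mod2pi t) \<noteq> \<infinity>"
    using kernel_eq_kr[OF assms, of "mod2pi t"] mod2pi_bounds[of t] by (cases "mod2pi t = 0") auto
  ultimately show ?thesis by simp
qed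

lemma kernel_neq_MInf:
  assumes "strictly_concave_kernel K" and "-2*pi < x" "x < 2*pi" "x \<noteq> 0"
  shows "K x \<noteq> -\<infinity>"
proof (cases "x < 0")
  case True
  hence "K x = ereal (kr K (x + 2*pi))"
    using kernel_periodic[OF assms(1), of x] kernel_eq_kr[OF assms(1), of "x + 2*pi"] assms by simp
  thus ?thesis by simp
next
  case False
  thus ?thesis using kernel_eq_kr[OF assms(1), of x] assms by simp
qed

lemma kernel_isCont:
  assumes K: "strictly_concave_kernel K"
  shows "isCont K t"
proof -
  obtain L where L: "(K \<longlongrightarrow> L) (at_right 0)" "(K \<longlongrightarrow> L) (at_left (2 * pi))" "K 0 = L"
    using kernel_boundary_limit[OF K] by metis
  have "(K \<longlongrightarrow> L) (at_left 0)"
  proof -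
    have "filterlim (\<lambda>x. x + 2*pi) (at_left (2*pi)) (at_left (0::real))"
      by (rule filterlim_at_withinI) (auto intro!: tendsto_eq_intros eventually_at_leftI[of "-1"])
    from filterlim_compose[OF L(2) this] show ?thesis by (simp add: kernel_periodic[OF K])
  qed
  hence cont0: "isCont K 0" unfolding isCont_def using filterlim_split_at[OF _ L(1)] L(3) by simp
  have cont_in: "isCont K x" if x: "0 < x" "x < 2*pi" for x
  proof -
    have "isCont (\<lambda>x. ereal (kr K x)) x"
      using strictly_concave_isCont[OF strictly_concave_kernel_kr[OF K] x] by (intro continuous_intros)
    moreover have "eventually (\<lambda>x. K x = ereal (kr K x)) (nhds x)"
      using eventually_nhds_in_open[of "{0<..<2*pi}" x] x
      by (auto elim!: eventually_mono intro: kernel_eq_kr[OF K])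
    ultimately show ?thesis using isCont_cong[of K "\<lambda>x. ereal (kr K x)" x] by simp
  qed
  define m where "m = \<lfloor>t / (2*pi)\<rfloor>"
  have "isCont K (mod2pi t)"
  proof (cases "mod2pi t = 0")
    case False
    hence "0 < mod2pi t" using mod2pi_bounds(1)[of t] by linarith
    thus ?thesis by (intro cont_in mod2pi_bounds(2))
  qed (use cont0 in \<open>simp only:\<close>)
  moreover have "mod2pi t = t - 2*pi * of_int m" by (simp add: mod2pi_def m_def)
  moreover have "isCont (\<lambda>x. x - 2*pi * of_int m) t" by (intro continuous_intros)
  ultimately have "isCont (\<lambda>x. K (x - 2*pi * of_int m)) t"
    using continuous_at_compose[of t "\<lambda>x. x - 2*pi * of_int m" K] by (simp add: comp_def)
  thus ?thesis using kernel_periodic_int[OF K, of "_ - 2*pi * of_int m" m] by simp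
qed

lemma kr_boundary_limits:
  assumes "strictly_concave_kernel K" "K 0 = ereal l"
  shows "(kr K \<longlongrightarrow> l) (at_right 0)" "(kr K \<longlongrightarrow> l) (at_left (2*pi))"
proof -
  obtain L where "(K \<longlongrightarrow> L) (at_right 0)" "(K \<longlongrightarrow> L) (at_left (2 * pi))" "K 0 = L"
    using kernel_boundary_limit[OF assms(1)] by metis
  hence "(K \<longlongrightarrow> ereal l) (at_right 0)" "(K \<longlongrightarrow> ereal l) (at_left (2*pi))" using assms(2) by simp_all
  from lim_real_of_ereal[OF this(1)] lim_real_of_ereal[OF this(2)]
  show "(kr K \<longlongrightarrow> l) (at_right 0)" "(kr K \<longlongrightarrow> l) (at_left (2*pi))"
    unfolding kr_def[abs_def] by auto
qed

lemma cond_inf'_one_sided_derivs: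
  assumes K: "strictly_concave_kernel K" and "cond_inf' K"
  shows "filterlim (right_deriv (kr K)) at_bot (at_left (2*pi)) \<or> filterlim (left_deriv (kr K)) at_top (at_right 0)"
proof -
  have sc: "strictly_concave_on {0<..<2*pi} (kr K)" by (rule strictly_concave_kernel_kr[OF K])
  have ev_left: "eventually (\<lambda>x. Dplus (kr K) x = right_deriv (kr K) x) (at_left (2*pi))"
    using eventually_at_left_real[of 0 "2*pi"] by (rule eventually_mono) (use Dplus_Dminus_eq(1)[OF sc] in auto)
  have ev_right: "eventually (\<lambda>x. Dminus (kr K) x = left_deriv (kr K) x) (at_right 0)"
    using eventually_at_right_real[of 0 "2*pi"] by (rule eventually_mono) (use Dplus_Dminus_eq(2)[OF sc] in auto)
  have "filterlim (Dplus (kr K)) at_bot (at_left (2*pi)) \<or> filterlim (Dminus (kr K)) at_top (at_right 0)"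
    using assms(2) unfolding cond_inf'_def by blast
  thus ?thesis using filterlim_cong[OF refl refl ev_left] filterlim_cong[OF refl refl ev_right] by blast
qed

lemma tendsto_sum_ereal_not_PInf:
  fixes f :: "'i \<Rightarrow> 'a \<Rightarrow> ereal"
  assumes "finite S" "\<And>i. i \<in> S \<Longrightarrow> (f i \<longlongrightarrow> a i) F" "\<And>i. i \<in> S \<Longrightarrow> a i \<noteq> \<infinity>"
  shows "((\<lambda>x. \<Sum>i\<in>S. f i x) \<longlongrightarrow> (\<Sum>i\<in>S. a i)) F"
  using assms
proof (induction S rule: finite_induct)
  case (insert i S)
  have "(\<Sum>i\<in>S. a i) \<noteq> \<infinity>" using insert by (simp add: sum_Pinfty)
  hence "((\<lambda>x. f i x + (\<Sum>i\<in>S. f i x)) \<longlongrightarrow> a i + (\<Sum>i\<in>S. a i)) F"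
    by (intro tendsto_add_ereal_general) (use insert in auto)
  thus ?case using insert by simp
qed simp

lemma sum_ereal_eq_ereal_sum:
  fixes f :: "'i \<Rightarrow> ereal"
  assumes "\<And>i. i \<in> S \<Longrightarrow> f i = ereal (g i)"
  shows "sum f S = ereal (sum g S)"
  using sum.cong[OF refl assms] by simp

lemma sum_ereal_term_neq_MInf:
  fixes f :: "'i \<Rightarrow> ereal"
  assumes "finite S" "\<And>i. i \<in> S \<Longrightarrow> f i \<noteq> \<infinity>" "sum f S \<noteq> -\<infinity>" "i \<in> S"
  shows "f i \<noteq> -\<infinity>"
proof
  assume "f i = -\<infinity>"
  have "sum f (S - {i}) \<noteq> \<infinity>" using assms(1,2) by (simp add: sum_Pinfty)
  hence "sum f S = -\<infinity>" using \<open>f i = -\<infinity>\<close> sum.remove[OF assms(1,4), of f] by simp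
  thus False using assms(3) by simp
qed

definition pole :: "(nat \<Rightarrow> real) \<Rightarrow> nat \<Rightarrow> real" where
  "pole y j = (if j = 0 then 0 else y j)"

lemma pole_bounds: "y \<in> torus n \<Longrightarrow> j \<in> {0..n} \<Longrightarrow> 0 \<le> pole y j \<and> pole y j < 2*pi"
  by (auto simp: pole_def torus_def)

lemma Fsum_eq_sum_poles: "Fsum n K y t = (\<Sum>j\<in>{0..n}. K j (t - pole y j))"
proof -
  have "(\<Sum>j\<in>{0..n}. K j (t - pole y j)) = K 0 (t - pole y 0) + (\<Sum>j\<in>{Suc 0..n}. K j (t - pole y j))"
    by (rule sum.atLeast_Suc_atMost) simp
  also have "(\<Sum>j\<in>{Suc 0..n}. K j (t - pole y j)) = (\<Sum>j\<in>{1..n}. K j (t - y j))"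
    by (rule sum.cong) (auto simp: pole_def)
  finally show ?thesis by (simp add: Fsum_def pole_def)
qed

locale kernel_family =
  fixes n :: nat and K :: "nat \<Rightarrow> real \<Rightarrow> ereal"
  assumes kernels: "\<forall>j\<in>{0..n}. strictly_concave_kernel (K j)"
begin

lemma kernel: "j \<in> {0..n} \<Longrightarrow> strictly_concave_kernel (K j)"
  using kernels by blast

lemma concave_kr: "j \<in> {0..n} \<Longrightarrow> strictly_concave_on {0<..<2*pi} (kr (K j))"
  by (rule strictly_concave_kernel_kr[OF kernel])

lemma Fsum_neq_PInf: "Fsum n K y t \<noteq> \<infinity>"
  unfolding Fsum_eq_sum_poles by (simp add: sum_Pinfty kernel_neq_PInf[OF kernel])

lemma Fsum_isCont:
  fixes t :: "'a::t2_space \<Rightarrow> real"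
  assumes "isCont t x" "\<And>j. isCont (\<lambda>x. y x j) x"
  shows "isCont (\<lambda>x. Fsum n K (y x) (t x)) x"
proof -
  have "isCont (\<lambda>x. K j (t x - pole (y x) j)) x" if j: "j \<in> {0..n}" for j
  proof -
    have "isCont (\<lambda>x. t x - pole (y x) j) x"
      using assms by (cases "j = 0") (auto simp: pole_def intro!: continuous_intros)
    thus ?thesis using continuous_at_compose[OF _ kernel_isCont[OF kernel[OF j]]] by (simp add: comp_def)
  qed
  thus ?thesis unfolding Fsum_eq_sum_poles isCont_def
    by (intro tendsto_sum_ereal_not_PInf) (auto simp: isCont_def kernel_neq_PInf[OF kernel])
qed

lemma Fsum_periodic_int: "Fsum n K y (t + 2*pi * of_int m) = Fsum n K y t"
  unfolding Fsum_eq_sum_poles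
  by (rule sum.cong) (use kernel_periodic_int[OF kernel, of _ "t - pole y _" m] in \<open>auto simp: algebra_simps\<close>)

lemma Fsum_2pi: "Fsum n K y (2*pi) = Fsum n K y 0"
  using Fsum_periodic_int[of y 0 1] by simp

lemma Fsum_mod2pi: "Fsum n K y (mod2pi t) = Fsum n K y t"
  using Fsum_periodic_int[of y "mod2pi t" "\<lfloor>t / (2*pi)\<rfloor>"] by (simp add: mod2pi_def)

lemma Fsum_shift_nodes:
  assumes "\<And>j. j \<in> {1..n} \<Longrightarrow> \<exists>m::int. y' j = y j + 2*pi * of_int m"
  shows "Fsum n K y' t = Fsum n K y t"
  unfolding Fsum_eq_sum_poles
proof (rule sum.cong)
  fix j assume j: "j \<in> {0..n}"
  show "K j (t - pole y' j) = K j (t - pole y j)"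
  proof (cases "j = 0")
    case False
    then obtain m :: int where m: "y' j = y j + 2*pi * of_int m" using assms j by fastforce
    have "K j (t - pole y' j) = K j ((t - pole y' j) + 2*pi * of_int m)"
      by (rule kernel_periodic_int[OF kernel[OF j], symmetric])
    also have "(t - pole y' j) + 2*pi * of_int m = t - pole y j" using m False by (simp add: pole_def)
    finally show ?thesis .
  qed (simp add: pole_def)
qed simp

lemma Fsum_eq_ereal_sum:
  assumes a: "\<And>j. j \<in> {0..n} \<Longrightarrow> a j \<in> {0, 2*pi}"
    and range: "\<And>j. j \<in> {0..n} \<Longrightarrow> 0 < t - pole y j + a j \<and> t - pole y j + a j < 2*pi"
  shows "Fsum n K y t = ereal (\<Sum>j\<in>{0..n}. kr (K j) (t - pole y j + a j))"
  unfolding Fsum_eq_sum_poles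
proof (rule sum_ereal_eq_ereal_sum)
  fix j assume j: "j \<in> {0..n}"
  have "K j (t - pole y j) = K j (t - pole y j + a j)"
    using a[OF j] kernel_periodic[OF kernel[OF j], of "t - pole y j"] by auto
  thus "K j (t - pole y j) = ereal (kr (K j) (t - pole y j + a j))"
    using kernel_eq_kr[OF kernel[OF j]] range[OF j] by simp
qed

definition Fmax :: "(nat \<Rightarrow> real) \<Rightarrow> ereal" where
  "Fmax y = (SUP t\<in>{0..2*pi}. Fsum n K y t)"

lemma Fsum_le_Fmax: "Fsum n K y t \<le> Fmax y"
  using SUP_upper[of "mod2pi t" "{0..2*pi}" "Fsum n K y"] mod2pi_bounds[of t]
  by (simp add: Fmax_def Fsum_mod2pi)

lemma Fmax_attained: obtains t where "t \<in> {0..2*pi}" "Fsum n K y t = Fmax y"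
proof -
  have "continuous_on {0..2*pi} (Fsum n K y)"
    using Fsum_isCont[where t="\<lambda>x. x" and y="\<lambda>x. y"] by (intro continuous_at_imp_continuous_on) auto
  then obtain t where t: "t \<in> {0..2*pi}" "\<forall>s\<in>{0..2*pi}. Fsum n K y s \<le> Fsum n K y t"
    using continuous_attains_sup[of "{0..2*pi}" "Fsum n K y"] by auto
  have "Fmax y \<le> Fsum n K y t" unfolding Fmax_def by (rule SUP_least) (use t in auto)
  thus ?thesis using t that Fsum_le_Fmax[of y t] by (auto intro: antisym)
qed

lemma Fmax_finite:
  assumes w: "w \<in> torus n"
  shows "\<bar>Fmax w\<bar> \<noteq> \<infinity>"
proof -
  have "infinite ({0<..<2*pi::real} - w ` {1..n})" by (rule Diff_infinite_finite) simp_all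
  then obtain t where t: "t \<in> {0<..<2*pi}" "t \<notin> w ` {1..n}" by (metis Diff_iff infinite_imp_nonempty ex_in_conv)
  have "K j (t - pole w j) \<noteq> -\<infinity>" if j: "j \<in> {0..n}" for j
  proof -
    have "t \<noteq> pole w j" using t j by (auto simp: pole_def)
    thus ?thesis using t pole_bounds[OF w j] by (intro kernel_neq_MInf[OF kernel[OF j]]) auto
  qed
  hence "Fsum n K w t = ereal (\<Sum>j\<in>{0..n}. real_of_ereal (K j (t - pole w j)))"
    unfolding Fsum_eq_sum_poles
  proof (intro sum_ereal_eq_ereal_sum)
    fix j assume "j \<in> {0..n}"
    thus "K j (t - pole w j) = ereal (real_of_ereal (K j (t - pole w j)))"
      using kernel_neq_PInf[OF kernel] \<open>\<And>j. j \<in> {0..n} \<Longrightarrow> K j (t - pole w j) \<noteq> -\<infinity>\<close>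
      by (cases "K j (t - pole w j)") auto
  qed
  hence "Fmax w \<noteq> -\<infinity>" using Fsum_le_Fmax[of w t] by auto
  moreover obtain s where "Fsum n K w s = Fmax w" using Fmax_attained by metis
  ultimately show ?thesis using Fsum_neq_PInf[of w s] by (cases "Fmax w") auto
qed

end

abbreviation sorted_node :: "nat \<Rightarrow> (nat \<Rightarrow> real) \<Rightarrow> (nat \<Rightarrow> nat) \<Rightarrow> nat \<Rightarrow> real" where
  "sorted_node n y \<sigma> k \<equiv> node n y (ext_perm n \<sigma> k)"

lemma sorted_node_0: "sorted_node n y \<sigma> 0 = 0"
  by (simp add: node_def ext_perm_def)

lemma sorted_node_last: "sorted_node n y \<sigma> (n+1) = 2*pi"
  by (simp add: node_def ext_perm_def)

lemma sorted_node_interior: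
  assumes "\<sigma> permutes {1..n}" "k \<in> {1..n}"
  shows "sorted_node n y \<sigma> k = y (\<sigma> k)" "\<sigma> k \<in> {1..n}"
proof -
  show \<sigma>k: "\<sigma> k \<in> {1..n}" using permutes_in_image[OF assms(1)] assms(2) by simp
  have "ext_perm n \<sigma> k = \<sigma> k" using assms(2) by (simp add: ext_perm_def)
  thus "sorted_node n y \<sigma> k = y (\<sigma> k)" using \<sigma>k by (simp add: node_def)
qed

lemma sorted_node_bounds:
  assumes y: "y \<in> torus n" and \<sigma>: "\<sigma> permutes {1..n}" and k: "k \<le> n+1"
  shows "0 \<le> sorted_node n y \<sigma> k \<and> sorted_node n y \<sigma> k \<le> 2*pi"
proof (cases "k = 0 \<or> k = n+1")
  case False
  hence "k \<in> {1..n}" using k by auto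
  thus ?thesis using sorted_node_interior[OF \<sigma>, of k] y by (auto simp: torus_def less_imp_le)
qed (use sorted_node_0[of n y \<sigma>] sorted_node_last[of n y \<sigma>] in auto)

lemma sorted_node_mono:
  assumes a: "admissible n y \<sigma>" and ij: "i \<le> j" "j \<le> n+1"
  shows "sorted_node n y \<sigma> i \<le> sorted_node n y \<sigma> j"
  using ij
proof (induction j)
  case (Suc j)
  show ?case
  proof (cases "i = Suc j")
    case False
    hence "sorted_node n y \<sigma> i \<le> sorted_node n y \<sigma> j" using Suc by simp
    also have "\<dots> \<le> sorted_node n y \<sigma> (j + 1)" using a Suc.prems unfolding admissible_def by auto
    finally show ?thesis by simp
  qed simp
qed simp

lemma permutes_of_enumeration:
  assumes "distinct xs" "set xs = {1..n}"
  shows "(\<lambda>i. if i \<in> {1..n} then xs ! (i - 1) else i) permutes {1..n}"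
proof -
  have len: "length xs = n" using distinct_card[OF assms(1)] assms(2) by simp
  let ?\<sigma> = "\<lambda>i. if i \<in> {1..n} then xs ! (i - 1) else i"
  have inj: "inj_on (\<lambda>i. xs ! (i - 1)) {1..n}"
  proof (rule inj_onI)
    fix a b assume ab: "a \<in> {1..n}" "b \<in> {1..n}" "xs ! (a - 1) = xs ! (b - 1)"
    hence "a - 1 = b - 1" using nth_eq_iff_index_eq[OF assms(1), of "a - 1" "b - 1"] len by auto
    thus "a = b" using ab by auto
  qed
  have "(\<lambda>i. xs ! (i - 1)) ` {1..n} \<subseteq> {1..n}"
  proof
    fix x assume "x \<in> (\<lambda>i. xs ! (i - 1)) ` {1..n}"
    then obtain i where "i \<in> {1..n}" "x = xs ! (i - 1)" by auto
    hence "x \<in> set xs" using len by auto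
    thus "x \<in> {1..n}" using assms(2) by simp
  qed
  hence "(\<lambda>i. xs ! (i - 1)) ` {1..n} = {1..n}" using endo_inj_surj[OF _ _ inj] by simp
  hence "bij_betw (\<lambda>i. xs ! (i - 1)) {1..n} {1..n}" using inj by (simp add: bij_betw_def)
  hence "bij_betw ?\<sigma> {1..n} {1..n}" using bij_betw_cong[of "{1..n}" ?\<sigma> "\<lambda>i. xs ! (i - 1)"] by simp
  thus ?thesis by (rule bij_imp_permutes) auto
qed

lemma admissible_exists:
  assumes y: "y \<in> torus n"
  shows "\<exists>\<sigma>. admissible n y \<sigma>"
proof -
  define xs where "xs = sort_key y [1..<Suc n]"
  have len: "length xs = n" and sorted: "sorted (map y xs)" by (simp_all add: xs_def)
  define \<sigma> where "\<sigma> i = (if i \<in> {1..n} then xs ! (i - 1) else i)" for i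
  have perm: "\<sigma> permutes {1..n}"
    unfolding \<sigma>_def by (rule permutes_of_enumeration) (auto simp: xs_def)
  have "sorted_node n y \<sigma> k \<le> sorted_node n y \<sigma> (k + 1)" if k: "k \<in> {0..n}" for k
  proof -
    consider "k = 0" | "k = n" "k \<noteq> 0" | "k \<in> {1..n}" "k + 1 \<in> {1..n}" using k by fastforce
    thus ?thesis
    proof cases
      case 1 thus ?thesis using sorted_node_bounds[OF y perm, of 1] by (simp add: sorted_node_0)
    next
      case 2
      hence "sorted_node n y \<sigma> k < 2*pi" using sorted_node_interior[OF perm, of k] y by (auto simp: torus_def)
      thus ?thesis using 2 sorted_node_last[of n y \<sigma>] by simp
    next
      case 3
      have "(map y xs) ! (k - 1) \<le> (map y xs) ! k" by (rule sorted_nth_mono[OF sorted]) (use 3 len in auto)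
      thus ?thesis using sorted_node_interior(1)[OF perm 3(1), of y] sorted_node_interior(1)[OF perm 3(2), of y] 3 len
        by (simp add: \<sigma>_def)
    qed
  qed
  thus ?thesis using perm unfolding admissible_def by blast
qed

lemma closed_arcs_cover:
  assumes "admissible n y \<sigma>" and t: "t \<in> {0..2*pi}"
  shows "\<exists>k\<in>{0..n}. sorted_node n y \<sigma> k \<le> t \<and> t \<le> sorted_node n y \<sigma> (k+1)"
proof -
  define S where "S = {i \<in> {0..n}. sorted_node n y \<sigma> i \<le> t}"
  have fin: "finite S" and ne: "0 \<in> S" using t by (auto simp: S_def sorted_node_0)
  define k where "k = Max S"
  have kS: "k \<in> S" using fin ne by (auto simp: k_def intro!: Max_in)
  have "t \<le> sorted_node n y \<sigma> (k+1)"
  proof (cases "k = n")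
    case False
    hence "k + 1 \<in> {0..n}" using kS by (auto simp: S_def)
    moreover have "k + 1 \<notin> S" using Max_ge[OF fin, of "k+1"] by (auto simp: k_def)
    ultimately show ?thesis by (auto simp: S_def)
  qed (use t sorted_node_last[of n y \<sigma>] in simp)
  thus ?thesis using kS by (auto simp: S_def)
qed

lemma (in kernel_family) m_upper_eq_Fmax:
  assumes y: "y \<in> torus n"
  shows "m_upper n K y = Fmax y"
proof -
  define \<sigma> where "\<sigma> = (SOME \<sigma>. admissible n y \<sigma>)"
  have a: "admissible n y \<sigma>" unfolding \<sigma>_def using admissible_exists[OF y] by (rule someI_ex)
  have perm: "\<sigma> permutes {1..n}" using a by (simp add: admissible_def)
  have le: "m_arc n K y \<sigma> k \<le> Fmax y" if "k \<in> {0..n}" for k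
    unfolding m_arc_def Fmax_def
    by (rule SUP_subset_mono) (use sorted_node_bounds[OF y perm, of k] sorted_node_bounds[OF y perm, of "k+1"] that in auto)
  have "Max (m_arc n K y \<sigma> ` {0..n}) \<le> Fmax y" using le by (subst Max_le_iff) auto
  moreover have "Fmax y \<le> Max (m_arc n K y \<sigma> ` {0..n})"
    unfolding Fmax_def
  proof (rule SUP_least)
    fix t assume "t \<in> {0..2*pi}"
    then obtain k where k: "k \<in> {0..n}" "sorted_node n y \<sigma> k \<le> t" "t \<le> sorted_node n y \<sigma> (k+1)"
      using closed_arcs_cover[OF a] by blast
    have "Fsum n K y t \<le> m_arc n K y \<sigma> k" unfolding m_arc_def by (rule SUP_upper) (use k in auto)
    also have "\<dots> \<le> Max (m_arc n K y \<sigma> ` {0..n})" using k by (intro Max_ge) auto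
    finally show "Fsum n K y t \<le> Max (m_arc n K y \<sigma> ` {0..n})" .
  qed
  ultimately show ?thesis unfolding m_upper_def Let_def \<sigma>_def[symmetric] by (rule antisym)
qed

definition pole_offset :: "(nat \<Rightarrow> real) \<Rightarrow> real \<Rightarrow> nat \<Rightarrow> real" where
  "pole_offset y p j = (if pole y j < p then p - pole y j else p - pole y j + 2*pi)"

lemma pole_offset_bounds:
  assumes "y \<in> torus n" "j \<in> {0..n}" "0 \<le> p" "p < 2*pi" "pole y j \<noteq> p"
  shows "0 < pole_offset y p j \<and> pole_offset y p j < 2*pi"
  using pole_bounds[OF assms(1,2)] assms(3-5) by (auto simp: pole_offset_def)

context kernel_family
begin

definition poles_at :: "(nat \<Rightarrow> real) \<Rightarrow> real \<Rightarrow> nat set" where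
  "poles_at y p = {j \<in> {0..n}. pole y j = p}"

lemma Fsum_split_at:
  "Fsum n K y (p + s) =
     (\<Sum>j\<in>poles_at y p. K j s) + (\<Sum>j\<in>{0..n} - poles_at y p. K j (pole_offset y p j + s))"
proof -
  have "poles_at y p \<subseteq> {0..n}" by (auto simp: poles_at_def)
  from sum.subset_diff[OF this finite_atLeastAtMost, of "\<lambda>j. K j (p + s - pole y j)"]
  have "Fsum n K y (p + s) = (\<Sum>j\<in>poles_at y p. K j (p + s - pole y j))
      + (\<Sum>j\<in>{0..n} - poles_at y p. K j (p + s - pole y j))"
    unfolding Fsum_eq_sum_poles by (simp add: add.commute)
  moreover have "K j (p + s - pole y j) = K j (pole_offset y p j + s)" if "j \<in> {0..n}" for j
    using kernel_periodic[OF kernel[OF that], of "p + s - pole y j"]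
    by (simp add: pole_offset_def algebra_simps)
  ultimately show ?thesis by (simp add: poles_at_def)
qed

lemma kernel_0_real_at_max_node:
  assumes w: "w \<in> torus n" and max: "Fsum n K w p = Fmax w" and j: "j \<in> poles_at w p"
  shows "K j 0 = ereal (kr (K j) 0)"
proof -
  have jn: "j \<in> {0..n}" and p: "pole w j = p" using j by (auto simp: poles_at_def)
  have "Fmax w \<noteq> -\<infinity>" using Fmax_finite[OF w] by (cases "Fmax w") auto
  hence "(\<Sum>j\<in>{0..n}. K j (p - pole w j)) \<noteq> -\<infinity>"
    using max by (simp add: Fsum_eq_sum_poles[symmetric])
  with kernel_neq_PInf[OF kernel] have "K j (p - pole w j) \<noteq> -\<infinity>"
    by (rule sum_ereal_term_neq_MInf[OF finite_atLeastAtMost _ _ jn])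
  thus ?thesis using p kernel_neq_PInf[OF kernel[OF jn], of 0] by (cases "K j 0") (auto simp: kr_def)
qed

lemma node_second_difference_nonpos:
  assumes w: "w \<in> torus n" and p: "0 \<le> p" "p < 2*pi" and max: "Fsum n K w p = Fmax w"
    and h: "0 < h" "h < 2*pi"
    and small: "\<And>j. j \<in> {0..n} - poles_at w p \<Longrightarrow> h < pole_offset w p j \<and> h < 2*pi - pole_offset w p j"
  shows "(\<Sum>j\<in>poles_at w p. kr (K j) h + kr (K j) (2*pi - h) - 2 * kr (K j) 0)
    + (\<Sum>j\<in>{0..n} - poles_at w p. kr (K j) (pole_offset w p j + h) + kr (K j) (pole_offset w p j - h)
        - 2 * kr (K j) (pole_offset w p j)) \<le> 0"
proof -
  let ?J = "poles_at w p" and ?R = "{0..n} - poles_at w p" and ?q = "pole_offset w p"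
  have jn: "j \<in> {0..n}" if "j \<in> ?J" for j using that by (auto simp: poles_at_def)
  have q: "0 < ?q j \<and> ?q j < 2*pi" if "j \<in> ?R" for j
    using pole_offset_bounds[OF w _ p] that by (auto simp: poles_at_def)
  have R_sum: "(\<Sum>j\<in>?R. K j (?q j + s)) = ereal (\<Sum>j\<in>?R. kr (K j) (?q j + s))" if "\<bar>s\<bar> \<le> h" for s
  proof (rule sum_ereal_eq_ereal_sum)
    fix j assume "j \<in> ?R"
    thus "K j (?q j + s) = ereal (kr (K j) (?q j + s))"
      using kernel_eq_kr[OF kernel, of j "?q j + s"] small[of j] q[of j] that by auto
  qed
  have "(\<Sum>j\<in>?J. K j 0) = ereal (\<Sum>j\<in>?J. kr (K j) 0)"
    by (rule sum_ereal_eq_ereal_sum) (rule kernel_0_real_at_max_node[OF w max])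
  hence "Fsum n K w p = ereal ((\<Sum>j\<in>?J. kr (K j) 0) + (\<Sum>j\<in>?R. kr (K j) (?q j)))"
    using Fsum_split_at[of w p 0] R_sum[of 0] h by simp
  moreover have "(\<Sum>j\<in>?J. K j h) = ereal (\<Sum>j\<in>?J. kr (K j) h)"
    by (rule sum_ereal_eq_ereal_sum) (use kernel_eq_kr[OF kernel[OF jn]] h in auto)
  hence "Fsum n K w (p + h) = ereal ((\<Sum>j\<in>?J. kr (K j) h) + (\<Sum>j\<in>?R. kr (K j) (?q j + h)))"
    using Fsum_split_at[of w p h] R_sum[of h] h by simp
  moreover have "(\<Sum>j\<in>?J. K j (- h)) = ereal (\<Sum>j\<in>?J. kr (K j) (2*pi - h))"
  proof (rule sum_ereal_eq_ereal_sum)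
    fix j assume "j \<in> ?J"
    thus "K j (- h) = ereal (kr (K j) (2*pi - h))"
      using kernel_periodic[OF kernel[OF jn], of j "- h"] kernel_eq_kr[OF kernel[OF jn], of j "2*pi - h"] h
      by simp
  qed
  hence "Fsum n K w (p + - h) = ereal ((\<Sum>j\<in>?J. kr (K j) (2*pi - h)) + (\<Sum>j\<in>?R. kr (K j) (?q j - h)))"
    using Fsum_split_at[of w p "- h"] R_sum[of "- h"] h by simp
  ultimately have "(\<Sum>j\<in>?J. kr (K j) h) + (\<Sum>j\<in>?R. kr (K j) (?q j + h))
      + ((\<Sum>j\<in>?J. kr (K j) (2*pi - h)) + (\<Sum>j\<in>?R. kr (K j) (?q j - h)))
      \<le> 2 * ((\<Sum>j\<in>?J. kr (K j) 0) + (\<Sum>j\<in>?R. kr (K j) (?q j)))"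
    using Fsum_le_Fmax[of w "p + h"] Fsum_le_Fmax[of w "p + - h"] max by simp
  thus ?thesis by (simp add: sum.distrib sum_subtractf sum_distrib_left)
qed

lemma kink_setting_at_max_node:
  assumes w: "w \<in> torus n" and p: "0 \<le> p" "p < 2*pi" and poles: "poles_at w p \<noteq> {}"
    and max: "Fsum n K w p = Fmax w"
  obtains h0 where "kink_setting (\<lambda>j. kr (K j)) (poles_at w p) ({0..n} - poles_at w p)
    (pole_offset w p) (\<lambda>j. kr (K j) 0) h0"
proof -
  define R where "R = {0..n} - poles_at w p"
  define q where "q = pole_offset w p"
  have q_range: "0 < q j \<and> q j < 2*pi" if "j \<in> R" for j
    using pole_offset_bounds[OF w _ p] that by (auto simp: q_def R_def poles_at_def)
  define h0 where "h0 = Min (insert pi ((\<lambda>j. min (q j) (2*pi - q j)) ` R))"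
  have h0: "0 < h0" "h0 \<le> pi" using q_range by (auto simp: h0_def R_def)
  have h0_q: "h0 \<le> q j \<and> h0 \<le> 2*pi - q j" if "j \<in> R" for j
  proof -
    have "h0 \<le> min (q j) (2*pi - q j)" unfolding h0_def using that by (intro Min_le) (auto simp: R_def)
    thus ?thesis by simp
  qed
  have "kink_setting (\<lambda>j. kr (K j)) (poles_at w p) R q (\<lambda>j. kr (K j) 0) h0"
  proof
    show "finite (poles_at w p)" "poles_at w p \<noteq> {}" using poles by (auto simp: poles_at_def)
    show "strictly_concave_on {0<..<2*pi} (kr (K j))" if "j \<in> poles_at w p \<union> R" for j
      using concave_kr that by (auto simp: R_def poles_at_def)
    show "(kr (K j) \<longlongrightarrow> kr (K j) 0) (at_right 0)" "(kr (K j) \<longlongrightarrow> kr (K j) 0) (at_left (2*pi))"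
      if "j \<in> poles_at w p" for j
      using kr_boundary_limits[OF kernel kernel_0_real_at_max_node[OF w max that]] that
      by (auto simp: poles_at_def)
    show "h0 \<le> q j \<and> h0 \<le> 2*pi - q j" if "j \<in> R" for j using h0_q[OF that] .
    show "0 < h0" "h0 \<le> pi" using h0 .
    fix h assume h: "0 < h" "h < h0"
    show "(\<Sum>j\<in>poles_at w p. kr (K j) h + kr (K j) (2*pi - h) - 2 * kr (K j) 0)
        + (\<Sum>j\<in>R. kr (K j) (q j + h) + kr (K j) (q j - h) - 2 * kr (K j) (q j)) \<le> 0"
      unfolding R_def q_def
    proof (rule node_second_difference_nonpos[OF w p max])
      show "0 < h" "h < 2*pi" using h h0 by auto
      fix j assume "j \<in> {0..n} - poles_at w p"
      hence "h0 \<le> q j \<and> h0 \<le> 2*pi - q j" by (intro h0_q) (simp add: R_def)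
      thus "h < pole_offset w p j \<and> h < 2*pi - pole_offset w p j" using h by (auto simp: q_def)
    qed
  qed
  thus ?thesis using that unfolding R_def q_def by blast
qed

lemma Fsum_node_less_Fmax:
  assumes reg: "(\<forall>j\<in>{0..n}. cond_inf' (K j)) \<or> (\<forall>j\<in>{0..n}. C1_kernel (K j))"
    and w: "w \<in> torus n" and p: "p = 0 \<or> (\<exists>j\<in>{1..n}. p = w j)"
  shows "Fsum n K w p < Fmax w"
proof (rule ccontr)
  assume "\<not> Fsum n K w p < Fmax w"
  hence max: "Fsum n K w p = Fmax w" using Fsum_le_Fmax[of w p] by simp
  have p_bounds: "0 \<le> p" "p < 2*pi" using p w by (auto simp: torus_def)
  have "\<exists>j0. j0 \<in> poles_at w p"
  proof (cases "p = 0")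
    case False
    then obtain j where "j \<in> {1..n}" "p = w j" using p by blast
    thus ?thesis by (intro exI[of _ j]) (auto simp: poles_at_def pole_def)
  qed (auto simp: poles_at_def pole_def intro!: exI[of _ 0])
  then obtain j0 where j0: "j0 \<in> poles_at w p" by blast
  then obtain h0 where "kink_setting (\<lambda>j. kr (K j)) (poles_at w p) ({0..n} - poles_at w p)
      (pole_offset w p) (\<lambda>j. kr (K j) 0) h0"
    using kink_setting_at_max_node[OF w p_bounds _ max] by blast
  then interpret kink_setting "\<lambda>j. kr (K j)" "poles_at w p" "{0..n} - poles_at w p"
    "pole_offset w p" "\<lambda>j. kr (K j) 0" h0 .
  from reg show False
  proof
    assume "\<forall>j\<in>{0..n}. cond_inf' (K j)"
    thus False using cond_inf'_one_sided_derivs[OF kernel] pole_right_deriv_not_tendsto_bot[OF j0]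
        pole_left_deriv_not_tendsto_top[OF j0] j0
      by (auto simp: poles_at_def)
  next
    assume "\<forall>j\<in>{0..n}. C1_kernel (K j)"
    then obtain k' where k': "\<forall>j\<in>{0..n}. (\<forall>t\<in>{0<..<2*pi}. (kr (K j) has_real_derivative k' j t) (at t))
        \<and> continuous_on {0<..<2*pi} (k' j)"
      unfolding C1_kernel_def by metis
    have "(regular_gap (\<lambda>j. kr (K j)) ({0..n} - poles_at w p) (pole_offset w p) \<longlongrightarrow> 0) (at_right 0)"
      by (rule regular_gap_tendsto_0[where g'=k'])
         (use k' concave pole_offset_bounds[OF w _ p_bounds] in \<open>auto simp: poles_at_def\<close>)
    thus False using regular_gap_not_tendsto_0 by blast
  qed
qed

end

section \<open>Local minima of \<open>m_upper\<close>\<close>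

lemma dT_le_abs:
  assumes a: "0 \<le> a" "a < 2*pi" and b: "0 \<le> b" "b < 2*pi"
    and e: "a = b + u + 2*pi * of_int m" and u: "\<bar>u\<bar> < pi"
  shows "dT a b \<le> \<bar>u\<bar>"
proof -
  consider "m = 0" | "m = 1" | "m = -1" | "m \<ge> 2" | "m \<le> -2" by linarith
  thus ?thesis
  proof cases
    case 1 thus ?thesis using e by (simp add: dT_def)
  next
    case 2
    hence "a - b = u + 2*pi" using e by simp
    thus ?thesis using a b u by (simp add: dT_def abs_if min_def)
  next
    case 3
    hence "a - b = u - 2*pi" using e by simp
    thus ?thesis using a b u by (simp add: dT_def abs_if min_def)
  next
    case 4
    hence "(2::real) \<le> of_int m" by simp
    hence X: "2*pi*2 \<le> 2*pi * of_int m" by (intro mult_left_mono) auto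
    have "-pi < u" "u < pi" using u by auto
    hence False using X e a b by linarith
    thus ?thesis ..
  next
    case 5
    hence "of_int m \<le> (-2::real)" by simp
    hence X: "2*pi * of_int m \<le> 2*pi*(-2)" by (intro mult_left_mono) auto
    have "-pi < u" "u < pi" using u by auto
    hence False using X e a b by linarith
    thus ?thesis ..
  qed
qed

lemma (in kernel_family) exists_torus_point_of_perturbation:
  assumes w: "w \<in> torus n" and \<eta>: "0 < \<eta>" and v: "\<And>j. j \<in> {1..n} \<Longrightarrow> \<bar>v j\<bar> < min \<eta> pi"
  shows "\<exists>y\<in>torus n. dTn n y w < \<eta> \<and> (\<forall>t. Fsum n K y t = Fsum n K (\<lambda>j. w j + v j) t)"
proof -
  define y where "y j = (if j \<in> {1..n} then mod2pi (w j + v j) else w j)" for j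
  have y: "y \<in> torus n" using mod2pi_bounds by (auto simp: torus_def y_def)
  have shift: "\<exists>m::int. y j = (w j + v j) + 2*pi * of_int m" if "j \<in> {1..n}" for j
    using that by (intro exI[of _ "- \<lfloor>(w j + v j) / (2*pi)\<rfloor>"]) (simp add: y_def mod2pi_def)
  have "dT (y j) (w j) < \<eta>" if j: "j \<in> {1..n}" for j
  proof -
    obtain m :: int where "y j = w j + v j + 2*pi * of_int m" using shift[OF j] by blast
    hence "dT (y j) (w j) \<le> \<bar>v j\<bar>"
      by (rule dT_le_abs[rotated 4]) (use y w j v[OF j] in \<open>auto simp: torus_def\<close>)
    thus ?thesis using v[OF j] by simp
  qed
  hence "dTn n y w < \<eta>" unfolding dTn_def using \<eta> by (subst Max_less_iff) auto
  moreover have "Fsum n K y t = Fsum n K (\<lambda>j. w j + v j) t" for t by (rule Fsum_shift_nodes) (use shift in auto)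
  ultimately show ?thesis using y by blast
qed

lemma small_perturbations_stay_inside:
  fixes s b :: "'i \<Rightarrow> real"
  assumes fin: "finite I" and s: "\<And>j. j \<in> I \<Longrightarrow> 0 < s j \<and> s j < 2*pi"
  shows "\<exists>\<rho>>0. \<forall>e \<tau>. 0 < e \<and> e < \<rho> \<and> \<bar>\<tau>\<bar> < \<rho> \<longrightarrow>
    (\<forall>j\<in>I. 0 < s j + \<tau> - e * b j \<and> s j + \<tau> - e * b j < 2*pi)"
proof -
  define m where "m = Min (insert pi ((\<lambda>j. min (s j) (2*pi - s j)) ` I))"
  have m: "0 < m" unfolding m_def using fin s by (subst Min_gr_iff) auto
  have m_s: "m \<le> s j \<and> m \<le> 2*pi - s j" if "j \<in> I" for j
  proof -
    have "m \<le> min (s j) (2*pi - s j)" unfolding m_def using fin that by (intro Min_le) auto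
    thus ?thesis by simp
  qed
  define D where "D = 1 + (\<Sum>j\<in>I. \<bar>b j\<bar>)"
  have D: "1 \<le> D" unfolding D_def by (simp add: sum_nonneg)
  have b_D: "\<bar>b j\<bar> \<le> D - 1" if "j \<in> I" for j
    unfolding D_def using member_le_sum[of j I "\<lambda>j. \<bar>b j\<bar>"] fin that by simp
  define \<rho> where "\<rho> = m / (2 * D)"
  have \<rho>: "0 < \<rho>" "\<rho> * D = m / 2" using m D by (simp_all add: \<rho>_def)
  show ?thesis
  proof (intro exI[of _ \<rho>] conjI allI impI ballI \<rho>(1))
    fix e \<tau> j assume e\<tau>: "0 < e \<and> e < \<rho> \<and> \<bar>\<tau>\<bar> < \<rho>" and j: "j \<in> I"
    have "\<bar>\<tau> - e * b j\<bar> \<le> \<bar>\<tau>\<bar> + e * \<bar>b j\<bar>" using e\<tau> abs_triangle_ineq4[of \<tau> "e * b j"] by (simp add: abs_mult)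
    also have "\<dots> \<le> \<rho> + \<rho> * (D - 1)" using e\<tau> b_D[OF j] by (intro add_mono mult_mono) auto
    also have "\<dots> = m / 2" using \<rho>(2) by (simp add: algebra_simps)
    finally show "0 < s j + \<tau> - e * b j" "s j + \<tau> - e * b j < 2*pi" using m_s[OF j] m by linarith+
  qed
qed

locale local_min_of_Fmax = kernel_family +
  fixes w :: "nat \<Rightarrow> real" and \<eta> :: real
  assumes reg: "(\<forall>j\<in>{0..n}. cond_inf' (K j)) \<or> (\<forall>j\<in>{0..n}. C1_kernel (K j))"
    and w: "w \<in> torus n" and \<eta>: "\<eta> > 0"
    and locmin: "\<forall>y\<in>torus n. dTn n y w < \<eta> \<longrightarrow> m_upper n K w \<le> m_upper n K y"
begin

definition \<sigma>w :: "nat \<Rightarrow> nat" where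
  "\<sigma>w = (SOME \<sigma>. admissible n w \<sigma>)"

abbreviation z :: "nat \<Rightarrow> real" where
  "z \<equiv> sorted_node n w \<sigma>w"

definition max_set :: "real set" where
  "max_set = {t \<in> {0..2*pi}. Fsum n K w t = Fmax w}"

definition max_arcs :: "nat set" where
  "max_arcs = {k \<in> {0..n}. \<exists>t\<in>max_set. z k < t \<and> t < z (k+1)}"

text \<open>The shift by \<open>0\<close> or \<open>2\<pi>\<close> that brings \<open>t - y\<^sub>j\<close> into \<open>(0, 2\<pi>)\<close>.\<close>

definition wrap :: "real \<Rightarrow> nat \<Rightarrow> real" where
  "wrap t j = (if t < pole w j then 2*pi else 0)"

lemma admissible_\<sigma>w: "admissible n w \<sigma>w"
  unfolding \<sigma>w_def using admissible_exists[OF w] by (rule someI_ex)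

lemma permutes_\<sigma>w: "\<sigma>w permutes {1..n}"
  using admissible_\<sigma>w by (simp add: admissible_def)

lemma wrap_in: "wrap t j \<in> {0, 2*pi}"
  by (simp add: wrap_def)

lemma max_set_avoids_nodes:
  assumes t: "t \<in> max_set"
  shows "0 < t" "t < 2*pi" "\<And>j. j \<in> {0..n} \<Longrightarrow> t \<noteq> pole w j"
proof -
  have t1: "t \<in> {0..2*pi}" "Fsum n K w t = Fmax w" using t by (auto simp: max_set_def)
  have k0: "Fsum n K w 0 < Fmax w" by (rule Fsum_node_less_Fmax[OF reg w]) simp
  show "0 < t" using t1 k0 by (cases "t = 0") auto
  show "t < 2*pi" using t1 k0 Fsum_2pi[of w] by (cases "t = 2*pi") auto
  fix j assume j: "j \<in> {0..n}"
  show "t \<noteq> pole w j"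
  proof (cases "j = 0")
    case False
    hence "Fsum n K w (w j) < Fmax w" using j by (intro Fsum_node_less_Fmax[OF reg w]) auto
    thus ?thesis using t1 False by (auto simp: pole_def)
  qed (use t1 k0 in \<open>auto simp: pole_def\<close>)
qed

lemma wrapped_arg_bounds:
  assumes "t \<in> max_set" "j \<in> {0..n}"
  shows "0 < t - pole w j + wrap t j \<and> t - pole w j + wrap t j < 2*pi"
  using max_set_avoids_nodes[OF assms(1)] max_set_avoids_nodes(3)[OF assms] pole_bounds[OF w assms(2)]
  by (auto simp: wrap_def)

lemma max_set_in_open_arc:
  assumes t: "t \<in> max_set"
  obtains k where "k \<in> {0..n}" "z k < t" "t < z (k+1)"
proof -
  have "t \<in> {0..2*pi}" using t by (simp add: max_set_def)
  then obtain k where k: "k \<in> {0..n}" "z k \<le> t" "t \<le> z (k+1)"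
    using closed_arcs_cover[OF admissible_\<sigma>w] by blast
  have ne: "z i \<noteq> t" if "i \<le> n+1" for i
  proof (cases "i = 0 \<or> i = n+1")
    case False
    hence i: "i \<in> {1..n}" using that by auto
    hence "t \<noteq> pole w (\<sigma>w i)"
      using max_set_avoids_nodes(3)[OF t, of "\<sigma>w i"] sorted_node_interior(2)[OF permutes_\<sigma>w] by auto
    thus ?thesis using sorted_node_interior(1)[OF permutes_\<sigma>w i, of w] sorted_node_interior(2)[OF permutes_\<sigma>w i]
      by (auto simp: pole_def)
  qed (use max_set_avoids_nodes[OF t] sorted_node_0[of n w \<sigma>w] sorted_node_last[of n w \<sigma>w] in auto)
  have "z k < t" "t < z (k+1)" using k ne[of k] ne[of "k+1"] by auto
  thus ?thesis using k that by blast
qed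

lemma wrap_const_on_arc:
  assumes k: "k \<in> {0..n}" and t: "z k < t" "t < z (k+1)" and t': "z k < t'" "t' < z (k+1)"
    and j: "j \<in> {0..n}"
  shows "wrap t j = wrap t' j"
proof (cases "j = 0")
  case True
  thus ?thesis using sorted_node_bounds[OF w permutes_\<sigma>w, of k] k t t' by (simp add: wrap_def pole_def)
next
  case False
  hence "j \<in> \<sigma>w ` {1..n}" using permutes_image[OF permutes_\<sigma>w] j by simp
  then obtain i where i: "i \<in> {1..n}" "z i = w j" using sorted_node_interior[OF permutes_\<sigma>w] by force
  have "z i \<le> z k \<or> z (k+1) \<le> z i"
    using sorted_node_mono[OF admissible_\<sigma>w, of i k] sorted_node_mono[OF admissible_\<sigma>w, of "k+1" i] i k
    by (cases "i \<le> k") auto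
  thus ?thesis using i t t' False by (auto simp: wrap_def pole_def)
qed

lemma max_arcs_nonempty: "max_arcs \<noteq> {}"
proof -
  obtain t where "t \<in> {0..2*pi}" "Fsum n K w t = Fmax w" using Fmax_attained by metis
  hence t: "t \<in> max_set" by (simp add: max_set_def)
  then obtain k where "k \<in> {0..n}" "z k < t" "t < z (k+1)" by (rule max_set_in_open_arc)
  thus ?thesis using t by (auto simp: max_arcs_def)
qed

definition arc_max_point :: "nat \<Rightarrow> real" where
  "arc_max_point k = (SOME t. t \<in> max_set \<and> z k < t \<and> t < z (k+1))"

lemma arc_max_point:
  assumes "k \<in> max_arcs"
  shows "arc_max_point k \<in> max_set" "z k < arc_max_point k" "arc_max_point k < z (k+1)"
proof -
  have "\<exists>t. t \<in> max_set \<and> z k < t \<and> t < z (k+1)" using assms by (auto simp: max_arcs_def)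
  from someI_ex[OF this] show "arc_max_point k \<in> max_set" "z k < arc_max_point k" "arc_max_point k < z (k+1)"
    unfolding arc_max_point_def by auto
qed

definition arc_arg :: "nat \<Rightarrow> nat \<Rightarrow> real" where
  "arc_arg k j = arc_max_point k - pole w j + wrap (arc_max_point k) j"

lemma arc_arg_bounds: "k \<in> max_arcs \<Longrightarrow> j \<in> {0..n} \<Longrightarrow> 0 < arc_arg k j \<and> arc_arg k j < 2*pi"
  unfolding arc_arg_def by (rule wrapped_arg_bounds[OF arc_max_point(1)])

lemma Fmax_eq_sum_arc_arg:
  assumes "k \<in> max_arcs"
  shows "Fmax w = ereal (\<Sum>j\<in>{0..n}. kr (K j) (arc_arg k j))"
  using Fsum_eq_ereal_sum[OF wrap_in wrapped_arg_bounds[OF arc_max_point(1)[OF assms]]] arc_max_point(1)[OF assms]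
  by (simp add: max_set_def arc_arg_def)

definition balanced_supergradient :: "nat \<Rightarrow> (nat \<Rightarrow> real) \<Rightarrow> bool" where
  "balanced_supergradient k c \<longleftrightarrow> (\<Sum>j\<in>{0..n}. c j) = 0 \<and>
     (\<forall>j\<in>{0..n}. right_deriv (kr (K j)) (arc_arg k j) \<le> c j \<and> c j \<le> left_deriv (kr (K j)) (arc_arg k j))"

lemma balanced_supergradient_exists:
  assumes k: "k \<in> max_arcs"
  shows "\<exists>c. balanced_supergradient k c"
  unfolding balanced_supergradient_def
proof -
  let ?s = "arc_arg k"
  have s: "0 < ?s j \<and> ?s j < 2*pi" if "j \<in> {0..n}" for j using arc_arg_bounds[OF k that] .
  have "\<exists>\<delta>>0. \<forall>e \<tau>. 0 < e \<and> e < \<delta> \<and> \<bar>\<tau>\<bar> < \<delta> \<longrightarrow>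
      (\<forall>j\<in>{0..n}. 0 < ?s j + \<tau> - e * 0 \<and> ?s j + \<tau> - e * 0 < 2*pi)"
    by (rule small_perturbations_stay_inside) (use s in auto)
  then obtain \<delta> where \<delta>: "0 < \<delta>" and inside: "\<forall>e \<tau>. 0 < e \<and> e < \<delta> \<and> \<bar>\<tau>\<bar> < \<delta> \<longrightarrow>
      (\<forall>j\<in>{0..n}. 0 < ?s j + \<tau> - e * 0 \<and> ?s j + \<tau> - e * 0 < 2*pi)" by blast
  show "\<exists>c. (\<Sum>j\<in>{0..n}. c j) = 0 \<and>
      (\<forall>j\<in>{0..n}. right_deriv (kr (K j)) (?s j) \<le> c j \<and> c j \<le> left_deriv (kr (K j)) (?s j))"
  proof (rule balanced_supergradient_at_local_max[OF concave_kr s \<delta>])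
    fix \<tau> :: real assume \<tau>: "\<bar>\<tau>\<bar> < \<delta>"
    have "Fsum n K w (arc_max_point k + \<tau>) = ereal (\<Sum>j\<in>{0..n}. kr (K j) (?s j + \<tau>))"
      using Fsum_eq_ereal_sum[OF wrap_in, of "arc_max_point k + \<tau>"] inside[rule_format, of "\<delta>/2" \<tau>] \<tau> \<delta>
      by (simp add: arc_arg_def algebra_simps)
    thus "(\<Sum>j\<in>{0..n}. kr (K j) (?s j + \<tau>)) \<le> (\<Sum>j\<in>{0..n}. kr (K j) (?s j))"
      using Fsum_le_Fmax[of w "arc_max_point k + \<tau>"] Fmax_eq_sum_arc_arg[OF k] by simp
  qed
qed

definition arc_supergradient :: "nat \<Rightarrow> nat \<Rightarrow> real" where
  "arc_supergradient k = (SOME c. balanced_supergradient k c)"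

lemma arc_supergradient: "k \<in> max_arcs \<Longrightarrow> balanced_supergradient k (arc_supergradient k)"
  unfolding arc_supergradient_def using balanced_supergradient_exists by (rule someI_ex)

lemma exists_descent_direction:
  assumes "max_arcs \<noteq> {0..n}"
  shows "\<exists>d. (\<exists>j\<in>{1..n}. d j \<noteq> 0) \<and> (\<forall>k\<in>max_arcs. 0 \<le> (\<Sum>j\<in>{1..n}. arc_supergradient k j * d j))"
proof (rule exists_nonzero_nonneg_solution)
  have sub: "max_arcs \<subseteq> {0..n}" by (auto simp: max_arcs_def)
  hence "card max_arcs < card {0..n}" using assms by (intro psubset_card_mono) auto
  thus "card max_arcs \<le> card {1..n}" by simp
  show "finite max_arcs" using sub finite_subset by blast
  show "{1..n} \<noteq> {}" using sub assms max_arcs_nonempty by (cases n) auto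
qed simp

text \<open>Moving the arguments \<open>arc_arg k j\<close> by \<open>\<tau> - e d\<^sub>j\<close> (with \<open>d\<^sub>0 = 0\<close>: the pole of \<open>K\<^sub>0\<close>
  does not move) lowers the sum, by the supergradient inequality and
  \<open>\<Sum>\<^sub>j c\<^sub>j = 0 \<le> \<Sum>\<^sub>j c\<^sub>j d\<^sub>j\<close>.\<close>

lemma sum_kr_below_Fmax_near_arc_max_point:
  assumes k: "k \<in> max_arcs" and d_nonzero: "\<exists>j\<in>{1..n}. d j \<noteq> 0"
    and d_nonneg: "0 \<le> (\<Sum>j\<in>{1..n}. arc_supergradient k j * d j)" and e: "0 < e"
    and u: "\<And>j. j \<in> {0..n} \<Longrightarrow> 0 < u j \<and> u j < 2*pi"
    and u_eq: "\<And>j. j \<in> {0..n} \<Longrightarrow> u j - arc_arg k j = \<tau> - e * (if j = 0 then 0 else d j)"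
  shows "ereal (\<Sum>j\<in>{0..n}. kr (K j) (u j)) < Fmax w"
proof -
  define c where "c = arc_supergradient k"
  define d0 where "d0 j = (if j = 0 then 0 else d j)" for j
  have c: "(\<Sum>j\<in>{0..n}. c j) = 0" "\<And>j. j \<in> {0..n} \<Longrightarrow>
      right_deriv (kr (K j)) (arc_arg k j) \<le> c j \<and> c j \<le> left_deriv (kr (K j)) (arc_arg k j)"
    using arc_supergradient[OF k] by (auto simp: balanced_supergradient_def c_def)
  have c_d0: "(\<Sum>j\<in>{0..n}. c j * d0 j) = (\<Sum>j\<in>{1..n}. c j * d j)"
    using sum.atLeast_Suc_atMost[of 0 n "\<lambda>j. c j * d0 j"] by (simp add: d0_def atLeastSucAtMost_greaterThanAtMost)
  have "\<exists>j\<in>{0..n}. u j \<noteq> arc_arg k j"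
  proof (cases "\<tau> = 0")
    case True
    then obtain j where "j \<in> {1..n}" "d j \<noteq> 0" using d_nonzero by blast
    thus ?thesis using e True u_eq[of j] by (intro bexI[of _ j]) auto
  qed (use u_eq[of 0] in \<open>auto intro!: bexI[of _ 0]\<close>)
  hence "(\<Sum>j\<in>{0..n}. kr (K j) (u j))
      < (\<Sum>j\<in>{0..n}. kr (K j) (arc_arg k j)) + (\<Sum>j\<in>{0..n}. c j * (u j - arc_arg k j))"
    by (intro sum_supergradient_less concave_kr arc_arg_bounds[OF k] u c(2)) auto
  also have "(\<Sum>j\<in>{0..n}. c j * (u j - arc_arg k j)) = (\<Sum>j\<in>{0..n}. \<tau> * c j - e * (c j * d0 j))"
    by (rule sum.cong) (simp_all add: u_eq d0_def algebra_simps)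
  also have "\<dots> = \<tau> * (\<Sum>j\<in>{0..n}. c j) - e * (\<Sum>j\<in>{0..n}. c j * d0 j)"
    by (simp add: sum_subtractf sum_distrib_left)
  also have "\<dots> \<le> 0" using c(1) c_d0 d_nonneg e by (simp add: c_def)
  finally show ?thesis using Fmax_eq_sum_arc_arg[OF k] by simp
qed

lemma Fsum_perturbed_below_near_max_point:
  assumes d_nonzero: "\<exists>j\<in>{1..n}. d j \<noteq> 0"
    and d_nonneg: "\<forall>k\<in>max_arcs. 0 \<le> (\<Sum>j\<in>{1..n}. arc_supergradient k j * d j)"
    and t0: "t0 \<in> max_set"
  shows "\<exists>\<rho>>0. \<forall>e t. 0 < e \<and> e < \<rho> \<and> \<bar>t - t0\<bar> < \<rho> \<longrightarrow> Fsum n K (\<lambda>j. w j + e * d j) t < Fmax w"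
proof -
  obtain k where k: "k \<in> {0..n}" "z k < t0" "t0 < z (k+1)" using max_set_in_open_arc[OF t0] by blast
  have k_max: "k \<in> max_arcs" using k t0 by (auto simp: max_arcs_def)
  have wrap_t0: "wrap t0 j = wrap (arc_max_point k) j" if "j \<in> {0..n}" for j
    by (rule wrap_const_on_arc[OF k(1) k(2,3) arc_max_point(2,3)[OF k_max] that])
  define d0 where "d0 j = (if j = 0 then 0 else d j)" for j
  define s0 where "s0 j = t0 - pole w j + wrap t0 j" for j
  have "\<exists>\<rho>>0. \<forall>e \<tau>. 0 < e \<and> e < \<rho> \<and> \<bar>\<tau>\<bar> < \<rho> \<longrightarrow>
      (\<forall>j\<in>{0..n}. 0 < s0 j + \<tau> - e * d0 j \<and> s0 j + \<tau> - e * d0 j < 2*pi)"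
    by (rule small_perturbations_stay_inside) (use wrapped_arg_bounds[OF t0] in \<open>auto simp: s0_def\<close>)
  then obtain \<rho> where \<rho>: "0 < \<rho>" and inside: "\<forall>e \<tau>. 0 < e \<and> e < \<rho> \<and> \<bar>\<tau>\<bar> < \<rho> \<longrightarrow>
      (\<forall>j\<in>{0..n}. 0 < s0 j + \<tau> - e * d0 j \<and> s0 j + \<tau> - e * d0 j < 2*pi)" by blast
  show ?thesis
  proof (intro exI[of _ \<rho>] conjI allI impI \<rho>)
    fix e t assume et: "0 < e \<and> e < \<rho> \<and> \<bar>t - t0\<bar> < \<rho>"
    define u where "u j = t - pole (\<lambda>j. w j + e * d j) j + wrap t0 j" for j
    have "u j = s0 j + (t - t0) - e * d0 j" for j by (simp add: u_def s0_def d0_def pole_def)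
    hence u: "0 < u j \<and> u j < 2*pi" if "j \<in> {0..n}" for j using inside et that by simp
    have "Fsum n K (\<lambda>j. w j + e * d j) t = ereal (\<Sum>j\<in>{0..n}. kr (K j) (u j))"
      unfolding u_def by (rule Fsum_eq_ereal_sum[OF wrap_in]) (use u in \<open>simp add: u_def\<close>)
    also have "\<dots> < Fmax w"
    proof (rule sum_kr_below_Fmax_near_arc_max_point[OF k_max d_nonzero _ _ u])
      show "u j - arc_arg k j = (t - arc_max_point k) - e * (if j = 0 then 0 else d j)" if "j \<in> {0..n}" for j
        using wrap_t0[OF that] by (simp add: u_def arc_arg_def pole_def)
    qed (use d_nonneg k_max et in auto)
    finally show "Fsum n K (\<lambda>j. w j + e * d j) t < Fmax w" .
  qed
qed

lemma Fsum_perturbed_below_near_nonmax: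
  assumes t0: "Fsum n K w t0 < Fmax w"
  shows "\<exists>\<rho>>0. \<forall>e t. 0 < e \<and> e < \<rho> \<and> \<bar>t - t0\<bar> < \<rho> \<longrightarrow> Fsum n K (\<lambda>j. w j + e * d j) t < Fmax w"
proof -
  define f where "f P = Fsum n K (\<lambda>j. w j + fst P * d j) (snd P)" for P :: "real \<times> real"
  have "isCont f (0, t0)" unfolding f_def by (rule Fsum_isCont) (auto intro!: continuous_intros)
  moreover have "f (0, t0) < Fmax w" using t0 by (simp add: f_def)
  ultimately obtain S where S: "open S" "(0, t0) \<in> S" "\<forall>x\<in>S. f x < Fmax w"
    unfolding continuous_at_open by (metis lessThan_iff open_lessThan)
  then obtain r where r: "r > 0" "\<forall>y. dist y (0, t0) < r \<longrightarrow> y \<in> S" unfolding open_dist by blast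
  show ?thesis
  proof (intro exI[of _ "r/2"] conjI allI impI)
    fix e t assume et: "0 < e \<and> e < r / 2 \<and> \<bar>t - t0\<bar> < r / 2"
    have "dist (e, t) (0, t0) \<le> dist e 0 + dist t t0"
      unfolding dist_Pair_Pair by (rule sqrt_sum_squares_le_sum[OF zero_le_dist zero_le_dist])
    hence "(e, t) \<in> S" using r et by (simp add: dist_real_def)
    hence "f (e, t) < Fmax w" using S(3) by blast
    thus "Fsum n K (\<lambda>j. w j + e * d j) t < Fmax w" by (simp add: f_def)
  qed (use r in simp)
qed

lemma Fsum_perturbed_below_uniformly:
  assumes d_nonzero: "\<exists>j\<in>{1..n}. d j \<noteq> 0"
    and d_nonneg: "\<forall>k\<in>max_arcs. 0 \<le> (\<Sum>j\<in>{1..n}. arc_supergradient k j * d j)"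
  shows "\<exists>\<rho>>0. \<forall>e t. 0 < e \<and> e < \<rho> \<and> t \<in> {0..2*pi} \<longrightarrow> Fsum n K (\<lambda>j. w j + e * d j) t < Fmax w"
proof -
  define good where "good t0 \<rho> \<longleftrightarrow> \<rho> > 0 \<and>
    (\<forall>e t. 0 < e \<and> e < \<rho> \<and> \<bar>t - t0\<bar> < \<rho> \<longrightarrow> Fsum n K (\<lambda>j. w j + e * d j) t < Fmax w)" for t0 \<rho>
  have "\<exists>\<rho>. good t0 \<rho>" if "t0 \<in> {0..2*pi}" for t0
  proof (cases "Fsum n K w t0 < Fmax w")
    case False
    hence "t0 \<in> max_set" using Fsum_le_Fmax[of w t0] that by (auto simp: max_set_def)
    thus ?thesis using Fsum_perturbed_below_near_max_point[OF d_nonzero d_nonneg] by (auto simp: good_def)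
  qed (use Fsum_perturbed_below_near_nonmax in \<open>auto simp: good_def\<close>)
  then obtain r where r: "\<And>t0. t0 \<in> {0..2*pi} \<Longrightarrow> good t0 (r t0)" by metis
  have cover: "{0..2*pi} \<subseteq> (\<Union>c\<in>{0..2*pi}. ball c (r c))"
  proof
    fix t assume t: "t \<in> {0..2*pi}"
    hence "t \<in> ball t (r t)" using r[OF t] by (simp add: good_def)
    thus "t \<in> (\<Union>c\<in>{0..2*pi}. ball c (r c))" using t by blast
  qed
  obtain C where C: "C \<subseteq> {0..2*pi}" "finite C" "{0..2*pi} \<subseteq> (\<Union>c\<in>C. ball c (r c))"
    using compactE_image[OF compact_Icc _ cover] by blast
  define \<rho> where "\<rho> = Min (insert 1 (r ` C))"
  have \<rho>: "0 < \<rho>" unfolding \<rho>_def using C r by (subst Min_gr_iff) (auto simp: good_def)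
  show ?thesis
  proof (intro exI[of _ \<rho>] conjI allI impI \<rho>)
    fix e t assume et: "0 < e \<and> e < \<rho> \<and> t \<in> {0..2*pi}"
    then obtain c where c: "c \<in> C" "\<bar>t - c\<bar> < r c" using C(3) by (force simp: dist_real_def abs_minus_commute)
    have "\<rho> \<le> r c" unfolding \<rho>_def using C c by (intro Min_le) auto
    thus "Fsum n K (\<lambda>j. w j + e * d j) t < Fmax w" using r[of c] C c et by (auto simp: good_def)
  qed
qed

lemma all_arcs_attain_max: "max_arcs = {0..n}"
proof (rule ccontr)
  assume "max_arcs \<noteq> {0..n}"
  then obtain d where d_nonzero: "\<exists>j\<in>{1..n}. d j \<noteq> 0"
    and d_nonneg: "\<forall>k\<in>max_arcs. 0 \<le> (\<Sum>j\<in>{1..n}. arc_supergradient k j * d j)"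
    using exists_descent_direction by blast
  obtain \<rho> where \<rho>: "0 < \<rho>" "\<And>e t. 0 < e \<Longrightarrow> e < \<rho> \<Longrightarrow> t \<in> {0..2*pi} \<Longrightarrow>
      Fsum n K (\<lambda>j. w j + e * d j) t < Fmax w"
    using Fsum_perturbed_below_uniformly[OF d_nonzero d_nonneg] by blast
  define D where "D = 1 + (\<Sum>j\<in>{1..n}. \<bar>d j\<bar>)"
  have D: "1 \<le> D" "\<And>j. j \<in> {1..n} \<Longrightarrow> \<bar>d j\<bar> \<le> D - 1"
    unfolding D_def using member_le_sum[of _ "{1..n}" "\<lambda>j. \<bar>d j\<bar>"] by (auto simp: sum_nonneg)
  define m where "m = min \<eta> pi"
  have m: "0 < m" "0 < m / D" using \<eta> D(1) by (simp_all add: m_def)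
  define e where "e = min \<rho> (m / D) / 2"
  have min: "0 < min \<rho> (m / D)" "min \<rho> (m / D) \<le> \<rho>" "min \<rho> (m / D) \<le> m / D" using \<rho>(1) m by auto
  have "e * D \<le> m / D / 2 * D" using min D(1) by (intro mult_right_mono) (auto simp: e_def)
  hence e: "0 < e" "e < \<rho>" "e * D < m" using min m D(1) by (auto simp: e_def)
  have "\<bar>e * d j\<bar> < m" if "j \<in> {1..n}" for j
  proof -
    have "\<bar>e * d j\<bar> \<le> e * (D - 1)" using D(2)[OF that] e(1) by (simp add: abs_mult)
    thus ?thesis using e by (simp add: algebra_simps)
  qed
  then obtain y where y: "y \<in> torus n" "dTn n y w < \<eta>" and Fy: "\<And>t. Fsum n K y t = Fsum n K (\<lambda>j. w j + e * d j) t"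
    using exists_torus_point_of_perturbation[OF w \<eta>, of "\<lambda>j. e * d j"] by (auto simp: m_def)
  have "m_upper n K w \<le> m_upper n K y" using locmin y by blast
  hence "Fmax w \<le> Fmax y" using m_upper_eq_Fmax[OF w] m_upper_eq_Fmax[OF y(1)] by simp
  moreover obtain t where "t \<in> {0..2*pi}" "Fsum n K y t = Fmax y" using Fmax_attained by metis
  ultimately show False using \<rho>(2)[OF e(1,2)] Fy by (metis not_le)
qed

lemma equioscillation:
  "m_lower n K w = m_upper n K w \<and> w \<in> open_simplex n \<sigma>w"
proof -
  have arc: "\<exists>t\<in>max_set. z k < t \<and> t < z (k+1)" if "k \<in> {0..n}" for k
    using all_arcs_attain_max that by (auto simp: max_arcs_def)
  have "m_arc n K w \<sigma>w k = Fmax w" if k: "k \<in> {0..n}" for k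
  proof (rule antisym)
    show "m_arc n K w \<sigma>w k \<le> Fmax w" unfolding m_arc_def by (rule SUP_least) (rule Fsum_le_Fmax)
    obtain t where t: "t \<in> max_set" "z k < t" "t < z (k+1)" using arc[OF k] by blast
    have "Fsum n K w t \<le> m_arc n K w \<sigma>w k" unfolding m_arc_def by (rule SUP_upper) (use t in auto)
    thus "Fmax w \<le> m_arc n K w \<sigma>w k" using t by (simp add: max_set_def)
  qed
  hence "m_arc n K w \<sigma>w ` {0..n} = {Fmax w}" by auto
  hence "m_upper n K w = Fmax w" "m_lower n K w = Fmax w"
    unfolding m_upper_def m_lower_def Let_def \<sigma>w_def[symmetric] by simp_all
  moreover have "w \<in> open_simplex n \<sigma>w" using arc by (fastforce simp: open_simplex_def)
  ultimately show ?thesis by simp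
qed

end

theorem proposition6p9:
  fixes n :: nat and K :: "nat \<Rightarrow> real \<Rightarrow> ereal" and w :: "nat \<Rightarrow> real" and \<eta> :: real
  assumes kern: "\<forall>j\<in>{0..n}. strictly_concave_kernel (K j)"
    and reg: "(\<forall>j\<in>{0..n}. cond_inf' (K j)) \<or> (\<forall>j\<in>{0..n}. C1_kernel (K j))"
    and w: "w \<in> torus n"
    and eta: "\<eta> > 0"
    and locmin: "\<forall>y\<in>torus n. dTn n y w < \<eta> \<longrightarrow> m_upper n K w \<le> m_upper n K y"
  shows "m_lower n K w = m_upper n K w \<and> (\<exists>\<sigma>. \<sigma> permutes {1..n} \<and> w \<in> open_simplex n \<sigma>)"
proof -
  interpret local_min_of_Fmax n K w \<eta>
    using kern reg w eta locmin by unfold_locales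
  show ?thesis using equioscillation permutes_\<sigma>w by blast
qed

end
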